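(* Let $T$ be a tree. Two elements $\mathfrak p,\mathfrak p'\in\mathfrak P_T$ satisfy $\mathfrak p\ge\mathfrak p'$ if and only if $\mathsf L_T(\mathfrak p')$ intersects the closure of $\mathsf L_T(\mathfrak p)$ in $\mathsf L_T$. If this holds, then $\mathsf L_T(\mathfrak p')$ is contained in the closure of $\mathsf L_T(\mathfrak p)$.
   Context: A tree is a nonempty finite connected acyclic graph with vertex set $V(T)$ and edge set $E(T)$ (two-element subsets of $V(T)$). Subgraphs are full (vertex-induced); a subtree is a subgraph which is a tree. A quotient tree $S\twoheadrightarrow R$ is a tree $R$ with a surjection $V(S)\to V(R)$ whose fibers are vertex sets of subtrees, vertices of $R$ adjacent iff an edge of $S$ joins their fibers. Arboreal singularity: for $\alpha\in V(T)$ let $\mathsf L_T(\alpha)=\mathbb R^{V(T)\setminus\{\alpha\}}$ with coordinates $x_\gamma(\alpha)$; $\mathsf L_T$ is the quotient of $\coprod_\alpha\mathsf L_T(\alpha)$ by the equivalence relation generated by identifying, for each edge $\{\alpha,\beta\}$, $\{x_\gamma(\alpha)\}\sim\{x_\gamma(\beta)\}$ whenever $x_\beta(\alpha)=x_\alpha(\beta)\ge0$ and $x_\gamma(\alpha)=x_\gamma(\beta)$ for $\gamma\ne\alpha,\beta$; each $\mathsf L_T(\alpha)$ is regarded as a subspace of $\mathsf L_T$. For $x\in\mathsf L_T$: $S_x$ is the full subgraph on $\{\alpha:x\in\mathsf L_T(\alpha)\}$, and $R_x$ is the quotient of $S_x$ contracting exactly the edges $\{\alpha,\beta\}\in E(S_x)$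 with $x_\beta(\alpha)=x_\alpha(\beta)>0$ at $x$. Poset $\mathfrak P_T$: elements are correspondences $\mathfrak p=(R\overset{q}{\twoheadleftarrow}S\overset{i}{\hookrightarrow}T)$, $i$ inclusion of a subtree, $q$ a quotient of trees (equivalently a subtree $S$ with a partition of $S$ into subtrees). Composition: for $\mathfrak q=(P\twoheadleftarrow Q\hookrightarrow R)$, $\mathfrak q\circ\mathfrak p=(P\twoheadleftarrow Q\times_RS\hookrightarrow T)$, where $Q\times_RS$ is the subtree of $S$ on vertices mapping into $Q$, included in $T$ via $S$ and mapped to $P$ via $Q$. Order: $\mathfrak p\ge\mathfrak p'$ iff $\mathfrak p=\mathfrak q\circ\mathfrak p'$ for some correspondence $\mathfrak q$ of the same kind. $\mathsf L_T(\mathfrak p)=\{x:(R_x\twoheadleftarrow S_x\hookrightarrow T)=\mathfrak p\}$. *)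

theory Defs
  imports "HOL-Analysis.Analysis" "HOL-Library.Disjoint_Sets"
begin

definition edges_ok :: "'v set \<Rightarrow> 'v set set \<Rightarrow> bool" where
  "edges_ok V E \<longleftrightarrow> (\<forall>e\<in>E. \<exists>a b. a \<noteq> b \<and> a \<in> V \<and> b \<in> V \<and> e = {a, b})"

definition is_walk :: "'v set set \<Rightarrow> 'v list \<Rightarrow> bool" where
  "is_walk E xs \<longleftrightarrow> xs \<noteq> [] \<and> (\<forall>i. Suc i < length xs \<longrightarrow> {xs ! i, xs ! Suc i} \<in> E)"

definition graph_connected :: "'v set \<Rightarrow> 'v set set \<Rightarrow> bool" where
  "graph_connected V E \<longleftrightarrow>
     (\<forall>a\<in>V. \<forall>b\<in>V. \<exists>xs. is_walk E xs \<and> set xs \<subseteq> V \<and> hd xs = a \<and> last xs = b)"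

definition is_cycle :: "'v set \<Rightarrow> 'v set set \<Rightarrow> 'v list \<Rightarrow> bool" where
  "is_cycle V E xs \<longleftrightarrow> length xs \<ge> 3 \<and> distinct xs \<and> set xs \<subseteq> V \<and> is_walk E xs
      \<and> {last xs, hd xs} \<in> E"

definition acyclic_graph :: "'v set \<Rightarrow> 'v set set \<Rightarrow> bool" where
  "acyclic_graph V E \<longleftrightarrow> (\<nexists>xs. is_cycle V E xs)"

definition is_tree :: "'v set \<Rightarrow> 'v set set \<Rightarrow> bool" where
  "is_tree V E \<longleftrightarrow> V \<noteq> {} \<and> finite V \<and> edges_ok V E \<and> graph_connected V E \<and> acyclic_graph V E"

definition induced_edges :: "'v set set \<Rightarrow> 'v set \<Rightarrow> 'v set set" where
  "induced_edges E S = {e \<in> E. e \<subseteq> S}"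

definition is_subtree :: "'v set \<Rightarrow> 'v set set \<Rightarrow> 'v set \<Rightarrow> bool" where
  "is_subtree V E S \<longleftrightarrow> S \<subseteq> V \<and> is_tree S (induced_edges E S)"

definition quot_edges :: "'v set set \<Rightarrow> 'v set set \<Rightarrow> 'v set set set" where
  "quot_edges E P = {{B1, B2} | B1 B2. B1 \<in> P \<and> B2 \<in> P \<and> B1 \<noteq> B2 \<and>
                         (\<exists>a\<in>B1. \<exists>b\<in>B2. {a, b} \<in> E)}"

text \<open>A correspondence R <<- S -> T is encoded by the vertex set S of a subtree of T
  together with a partition P of S into subtrees (the fibres of S ->> R).\<close>
definition is_corr :: "'v set \<Rightarrow> 'v set set \<Rightarrow> 'v set \<times> 'v set set \<Rightarrow> bool" where
  "is_corr V E p \<longleftrightarrow> is_subtree V E (fst p) \<and> partition_on (fst p) (snd p)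
      \<and> (\<forall>B\<in>snd p. is_subtree V E B)"

text \<open>Composition q o p for q = (P <<- Q -> R) a correspondence on the quotient tree R of p:
  Q x_R S is the union of the blocks in Q, and its fibre over a vertex of P is the union of
  the blocks of p lying in the corresponding fibre of q.\<close>
definition corr_comp :: "'v set set \<times> 'v set set set \<Rightarrow> 'v set \<times> 'v set set \<Rightarrow> 'v set \<times> 'v set set" where
  "corr_comp q p = (\<Union>(fst q), Union ` (snd q))"

definition corr_ge :: "'v set set \<Rightarrow> 'v set \<times> 'v set set \<Rightarrow> 'v set \<times> 'v set set \<Rightarrow> bool" where
  "corr_ge E p p' \<longleftrightarrow>
     (\<exists>q. is_corr (snd p') (quot_edges E (snd p')) q \<and> p = corr_comp q p')"

definition quotient_topology :: "'a topology \<Rightarrow> ('a \<times> 'a) set \<Rightarrow> 'a set topology" where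
  "quotient_topology X r = topology (\<lambda>U. U \<subseteq> topspace X // r \<and>
       openin X {z \<in> topspace X. r `` {z} \<in> U})"

lemma istopology_quotient:
  "istopology (\<lambda>U. U \<subseteq> topspace X // r \<and> openin X {z \<in> topspace X. r `` {z} \<in> U})"
proof -
  have 1: "{z \<in> topspace X. r `` {z} \<in> S \<inter> T} =
           {z \<in> topspace X. r `` {z} \<in> S} \<inter> {z \<in> topspace X. r `` {z} \<in> T}" for S T
    by auto
  have 2: "{z \<in> topspace X. r `` {z} \<in> \<Union>K} = (\<Union>U\<in>K. {z \<in> topspace X. r `` {z} \<in> U})" for K
    by auto
  show ?thesis
    unfolding istopology_def using 1 2 by (auto intro!: openin_Union)
qed

text \<open>Points of the disjoint union of the L_T(alpha): pairs (alpha, x) with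
  x in R^(V - {alpha}) (extensional functions).\<close>
definition arb_disj :: "'v set \<Rightarrow> ('v \<times> ('v \<Rightarrow> real)) topology" where
  "arb_disj V = sum_topology (\<lambda>\<alpha>. product_topology (\<lambda>_. euclideanreal) (V - {\<alpha>})) V"

definition arb_gen :: "'v set \<Rightarrow> 'v set set \<Rightarrow> (('v \<times> ('v \<Rightarrow> real)) \<times> ('v \<times> ('v \<Rightarrow> real))) set" where
  "arb_gen V E = {((\<alpha>, x), (\<beta>, y)). (\<alpha>, x) \<in> topspace (arb_disj V) \<and> (\<beta>, y) \<in> topspace (arb_disj V)
      \<and> {\<alpha>, \<beta>} \<in> E \<and> \<alpha> \<noteq> \<beta> \<and> x \<beta> = y \<alpha> \<and> x \<beta> \<ge> 0
      \<and> (\<forall>\<gamma>\<in>V - {\<alpha>, \<beta>}. x \<gamma> = y \<gamma>)}"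

definition arb_rel :: "'v set \<Rightarrow> 'v set set \<Rightarrow> (('v \<times> ('v \<Rightarrow> real)) \<times> ('v \<times> ('v \<Rightarrow> real))) set" where
  "arb_rel V E = Id_on (topspace (arb_disj V)) \<union> (arb_gen V E \<union> (arb_gen V E)\<inverse>)\<^sup>+"

definition arb_space :: "'v set \<Rightarrow> 'v set set \<Rightarrow> ('v \<times> ('v \<Rightarrow> real)) set topology" where
  "arb_space V E = quotient_topology (arb_disj V) (arb_rel V E)"

text \<open>S_x: vertices alpha with x in L_T(alpha).\<close>
definition S_pt :: "'v set \<Rightarrow> ('v \<times> ('v \<Rightarrow> real)) set \<Rightarrow> 'v set" where
  "S_pt V c = {\<alpha>\<in>V. \<exists>u. (\<alpha>, u) \<in> c}"

definition contr_rel :: "'v set \<Rightarrow> 'v set set \<Rightarrow> ('v \<times> ('v \<Rightarrow> real)) set \<Rightarrow> ('v \<times> 'v) set" where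
  "contr_rel V E c = {(\<alpha>, \<beta>). \<alpha> \<in> S_pt V c \<and> \<beta> \<in> S_pt V c \<and> {\<alpha>, \<beta>} \<in> E \<and>
      (\<exists>u v. (\<alpha>, u) \<in> c \<and> (\<beta>, v) \<in> c \<and> u \<beta> = v \<alpha> \<and> u \<beta> > 0)}"

text \<open>The correspondence (R_x <<- S_x -> T) of a point x, encoded as (S_x, fibres of S_x ->> R_x).\<close>
definition corr_pt :: "'v set \<Rightarrow> 'v set set \<Rightarrow> ('v \<times> ('v \<Rightarrow> real)) set \<Rightarrow> 'v set \<times> 'v set set" where
  "corr_pt V E c = (S_pt V c, S_pt V c // ((contr_rel V E c)\<^sup>*))"

definition stratum :: "'v set \<Rightarrow> 'v set set \<Rightarrow> 'v set \<times> 'v set set \<Rightarrow> ('v \<times> ('v \<Rightarrow> real)) set set" where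
  "stratum V E p = {c \<in> topspace (arb_space V E). corr_pt V E c = p}"

end

theory Submission
  imports Defs "HOL-Library.Transitive_Closure_Table"
begin

(*
  In the chart L_T(alpha), attach the coordinate x_gamma to the edge of T through which gamma is
  entered on the way from alpha.  This turns every L_T(alpha) into a copy of R^E, and the gluing
  across an edge {alpha, beta} with nonnegative coordinate does not change these edge coordinates.
  Hence a point of L_T is a pair (alpha, w) with w : E -> R, up to moving alpha along edges where
  w >= 0.  In these coordinates S_x is the component of alpha in the graph of edges with w >= 0,
  and the blocks of R_x are the components of the edges with w > 0; so the stratum of
  p = (R <<- S -> T) is a box in R^E: w > 0 on edges inside the blocks of p, w = 0 on the other
  edges of S, and w < 0 on the edges leaving S.  Its closure is obtained by relaxing the strict
  inequalities, which gives a closed set of L_T because only finitely many patterns of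
  nonnegative edges occur.  Comparing boxes, the stratum of p' = (R' <<- S' -> T) meets this
  closure iff it is contained in it iff S is contained in S' and every block of p' meeting S lies
  in a block of p; and this condition says exactly that p = q o p', where q groups the blocks of
  p' inside S along the blocks of p.
*)

definition edge_rel :: "'v set set \<Rightarrow> ('v \<times> 'v) set" where
  "edge_rel F = {(a, b). {a, b} \<in> F}"

lemma edge_rel_iff [simp]: "(a, b) \<in> edge_rel F \<longleftrightarrow> {a, b} \<in> F"
  by (simp add: edge_rel_def)

lemma converse_edge_rel [simp]: "(edge_rel F)\<inverse> = edge_rel F"
  by (auto simp: edge_rel_def insert_commute)

lemma rtrancl_edge_rel_sym: "(a, b) \<in> (edge_rel F)\<^sup>* \<Longrightarrow> (b, a) \<in> (edge_rel F)\<^sup>*"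
  by (metis converse_edge_rel rtrancl_converseI)

lemma rtrancl_edge_rel_mono: "F \<subseteq> G \<Longrightarrow> (a, b) \<in> (edge_rel F)\<^sup>* \<Longrightarrow> (a, b) \<in> (edge_rel G)\<^sup>*"
  by (metis edge_rel_iff rtrancl_mono subrelI subsetD)

lemma is_walk_imp_rtrancl: "is_walk F xs \<Longrightarrow> (hd xs, last xs) \<in> (edge_rel F)\<^sup>*"
proof (induction xs)
  case Nil
  then show ?case by (simp add: is_walk_def)
next
  case (Cons a ys)
  show ?case
  proof (cases "ys = []")
    case False
    have "{a, hd ys} \<in> F"
      using Cons.prems False by (auto simp: is_walk_def hd_conv_nth)
    moreover have "is_walk F ys"
      using Cons.prems False unfolding is_walk_def by (metis Suc_less_eq length_Cons nth_Cons_Suc)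
    ultimately show ?thesis
      using Cons.IH False by (simp add: converse_rtrancl_into_rtrancl)
  qed simp
qed

lemma rtrancl_imp_is_walk:
  assumes "(a, b) \<in> (edge_rel F)\<^sup>*"
  obtains xs where "is_walk F xs" "hd xs = a" "last xs = b" "set xs \<subseteq> insert a (\<Union>F)"
  using assms
proof (induction arbitrary: thesis rule: rtrancl_induct)
  case base
  show ?case by (rule base[of "[a]"]) (simp_all add: is_walk_def)
next
  case (step b c)
  obtain xs where xs: "is_walk F xs" "hd xs = a" "last xs = b" "set xs \<subseteq> insert a (\<Union>F)"
    using step.IH by blast
  have "xs \<noteq> []"
    using xs(1) by (simp add: is_walk_def)
  have "is_walk F (xs @ [c])"
    unfolding is_walk_def
  proof (intro conjI allI impI)
    fix i assume i: "Suc i < length (xs @ [c])"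
    show "{(xs @ [c]) ! i, (xs @ [c]) ! Suc i} \<in> F"
    proof (cases "Suc i < length xs")
      case True
      then show ?thesis using xs(1) by (simp add: is_walk_def nth_append)
    next
      case False
      then have "i = length xs - 1" using i by simp
      then show ?thesis
        using step.hyps(2) xs(3) \<open>xs \<noteq> []\<close> by (simp add: nth_append last_conv_nth)
    qed
  qed simp
  moreover have "set (xs @ [c]) \<subseteq> insert a (\<Union>F)"
    using xs(4) step.hyps(2) by auto
  ultimately show ?case
    using step.prems xs(2) \<open>xs \<noteq> []\<close> by simp
qed

lemma graph_connected_imp_rtrancl:
  "graph_connected W F \<Longrightarrow> a \<in> W \<Longrightarrow> b \<in> W \<Longrightarrow> (a, b) \<in> (edge_rel F)\<^sup>*"
  unfolding graph_connected_def by (metis is_walk_imp_rtrancl)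

lemma graph_connectedI_rtrancl:
  assumes "\<Union>F \<subseteq> W" and "\<And>a b. a \<in> W \<Longrightarrow> b \<in> W \<Longrightarrow> (a, b) \<in> (edge_rel F)\<^sup>*"
  shows "graph_connected W F"
  unfolding graph_connected_def
proof (intro ballI)
  fix a b assume ab: "a \<in> W" "b \<in> W"
  obtain xs where "is_walk F xs" "hd xs = a" "last xs = b" "set xs \<subseteq> insert a (\<Union>F)"
    using rtrancl_imp_is_walk[OF assms(2)[OF ab]] .
  then show "\<exists>xs. is_walk F xs \<and> set xs \<subseteq> W \<and> hd xs = a \<and> last xs = b"
    using assms(1) ab by blast
qed

lemma rtrancl_path_last_nth:
  "rtrancl_path r a ys b \<Longrightarrow>
     last (a # ys) = b \<and> (\<forall>i. Suc i < length (a # ys) \<longrightarrow> r ((a # ys) ! i) ((a # ys) ! Suc i))"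
proof (induction rule: rtrancl_path.induct)
  case (step x y ys z)
  then show ?case
    by (auto simp: less_Suc_eq_0_disj)
qed simp

lemma rtrancl_imp_distinct_rtrancl_path:
  assumes "(a, b) \<in> R\<^sup>*"
  obtains ys where "rtrancl_path (\<lambda>x y. (x, y) \<in> R) a ys b" "distinct (a # ys)"
proof -
  have "(\<lambda>x y. (x, y) \<in> R)\<^sup>*\<^sup>* a b"
    using assms by (simp add: rtranclp_rtrancl_eq)
  then obtain xs where "rtrancl_path (\<lambda>x y. (x, y) \<in> R) a xs b"
    unfolding rtranclp_eq_rtrancl_path by blast
  then show ?thesis
    using rtrancl_path_distinct that by metis
qed

lemma edges_okD: "edges_ok V E \<Longrightarrow> {a, b} \<in> E \<Longrightarrow> a \<noteq> b \<and> a \<in> V \<and> b \<in> V"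
proof -
  assume "edges_ok V E" "{a, b} \<in> E"
  then obtain c d where "c \<noteq> d" "c \<in> V" "d \<in> V" "{a, b} = {c, d}"
    unfolding edges_ok_def by meson
  then show ?thesis by (auto simp: doubleton_eq_iff)
qed

lemma edges_ok_subset: "edges_ok V E \<Longrightarrow> e \<in> E \<Longrightarrow> e \<subseteq> V"
  unfolding edges_ok_def by fastforce

lemma edges_ok_rtrancl_closed:
  assumes "edges_ok V E" "F \<subseteq> E" "(a, b) \<in> (edge_rel F)\<^sup>*" "a \<in> V"
  shows "b \<in> V"
  using assms(3,4)
proof (induction rule: rtrancl_induct)
  case (step y z)
  then have "{y, z} \<in> E"
    using assms(2) by auto
  then show ?case
    using edges_okD[OF assms(1)] by blast
qed

lemma is_cycle_closing_edge:
  assumes eok: "edges_ok V E" and e: "{a, b} \<in> E"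
    and p: "rtrancl_path (\<lambda>x y. (x, y) \<in> edge_rel (E - {{a, b}})) a ys b" "distinct (a # ys)"
  shows "is_cycle V E (a # ys)"
proof -
  let ?xs = "a # ys"
  have ab: "a \<noteq> b" "a \<in> V"
    using edges_okD[OF eok e] by auto
  have last: "last ?xs = b"
    using rtrancl_path_last_nth[OF p(1)] by blast
  have step: "{?xs ! i, ?xs ! Suc i} \<in> E - {{a, b}}" if "Suc i < length ?xs" for i
    using rtrancl_path_last_nth[OF p(1)] that by (metis edge_rel_iff)
  have "length ?xs \<ge> 3"
  proof (cases ys)
    case Nil
    then show ?thesis using last ab(1) by simp
  next
    case (Cons y zs)
    have "{a, y} \<noteq> {a, b}"
      using step[of 0] Cons by simp
    then have "zs \<noteq> []"
      using last Cons by auto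
    then show ?thesis
      using Cons by (simp add: Suc_le_eq)
  qed
  moreover have "set ?xs \<subseteq> V"
  proof
    fix v assume "v \<in> set ?xs"
    then obtain i where i: "i < length ?xs" "?xs ! i = v"
      by (meson in_set_conv_nth)
    show "v \<in> V"
    proof (cases i)
      case (Suc j)
      then have "{?xs ! j, v} \<in> E"
        using step[of j] i by simp
      then show ?thesis
        using edges_okD[OF eok] by blast
    qed (use i ab in simp)
  qed
  moreover have "is_walk E ?xs"
    using step by (auto simp: is_walk_def)
  moreover have "{last ?xs, hd ?xs} \<in> E"
    using last e by (simp add: insert_commute)
  ultimately show ?thesis
    unfolding is_cycle_def using p(2) by blast
qed

lemma tree_edge_is_bridge:
  assumes "is_tree V E" "{a, b} \<in> E"
  shows "(a, b) \<notin> (edge_rel (E - {{a, b}}))\<^sup>*"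
proof
  have eok: "edges_ok V E"
    using assms(1) by (simp add: is_tree_def)
  assume "(a, b) \<in> (edge_rel (E - {{a, b}}))\<^sup>*"
  then obtain ys where "rtrancl_path (\<lambda>x y. (x, y) \<in> edge_rel (E - {{a, b}})) a ys b" "distinct (a # ys)"
    by (rule rtrancl_imp_distinct_rtrancl_path)
  then have "is_cycle V E (a # ys)"
    by (rule is_cycle_closing_edge[OF eok assms(2)])
  then show False
    using assms(1) by (auto simp: is_tree_def acyclic_graph_def)
qed

lemma acyclic_graphI_bridges:
  assumes "\<And>a b. {a, b} \<in> F \<Longrightarrow> a \<noteq> b \<Longrightarrow> (a, b) \<notin> (edge_rel (F - {{a, b}}))\<^sup>*"
  shows "acyclic_graph W F"
  unfolding acyclic_graph_def
proof
  assume "\<exists>xs. is_cycle W F xs"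
  then obtain xs where "is_cycle W F xs" by blast
  let ?n = "length xs"
  have n: "?n \<ge> 3" "distinct xs" "is_walk F xs" "{last xs, hd xs} \<in> F"
    using \<open>is_cycle W F xs\<close> by (auto simp: is_cycle_def)
  have ne: "xs \<noteq> []"
    using n(1) by auto
  then have hl: "hd xs = xs ! 0" "last xs = xs ! (?n - 1)"
    by (simp_all add: hd_conv_nth last_conv_nth)
  have nth_eq: "\<And>i j. i < ?n \<Longrightarrow> j < ?n \<Longrightarrow> xs ! i = xs ! j \<longleftrightarrow> i = j"
    using n(2) nth_eq_iff_index_eq by blast
  have dif: "last xs \<noteq> hd xs"
    unfolding hl using n(1,2) by (subst nth_eq_iff_index_eq) auto
  have "is_walk (F - {{last xs, hd xs}}) xs"
    unfolding is_walk_def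
  proof (intro conjI allI impI)
    fix i assume i: "Suc i < ?n"
    \<comment> \<open>a walk step can only coincide with the closing edge if it joins positions \<open>0\<close> and \<open>n - 1\<close>\<close>
    have "{xs ! i, xs ! Suc i} \<noteq> {xs ! (?n - 1), xs ! 0}"
    proof
      assume "{xs ! i, xs ! Suc i} = {xs ! (?n - 1), xs ! 0}"
      then have "(xs ! i = xs ! (?n - 1) \<and> xs ! Suc i = xs ! 0) \<or>
          (xs ! i = xs ! 0 \<and> xs ! Suc i = xs ! (?n - 1))"
        by (simp add: doubleton_eq_iff)
      then show False
        using i n(1) nth_eq[of i "?n - 1"] nth_eq[of i 0] nth_eq[of "Suc i" "?n - 1"] nth_eq[of "Suc i" 0]
        by linarith
    qed
    then show "{xs ! i, xs ! Suc i} \<in> F - {{last xs, hd xs}}"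
      using n(3) i hl by (auto simp: is_walk_def)
  qed (rule ne)
  then have "(hd xs, last xs) \<in> (edge_rel (F - {{last xs, hd xs}}))\<^sup>*"
    by (rule is_walk_imp_rtrancl)
  then have "(last xs, hd xs) \<in> (edge_rel (F - {{last xs, hd xs}}))\<^sup>*"
    by (rule rtrancl_edge_rel_sym)
  then show False
    using assms n(4) dif by blast
qed

lemma rtrancl_path_avoiding:
  "rtrancl_path (\<lambda>x y. (x, y) \<in> edge_rel F) x l y \<Longrightarrow> g \<notin> set (x # l) \<Longrightarrow>
     (x, y) \<in> (edge_rel (F - {f. g \<in> f}))\<^sup>*"
proof (induction rule: rtrancl_path.induct)
  case (step x y ys z)
  then have "(x, y) \<in> edge_rel (F - {f. g \<in> f})" "(y, z) \<in> (edge_rel (F - {f. g \<in> f}))\<^sup>*"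
    by simp_all
  then show ?case
    by (meson converse_rtrancl_into_rtrancl)
qed simp

lemma subtree_rtrancl:
  "is_subtree V E U \<Longrightarrow> x \<in> U \<Longrightarrow> y \<in> U \<Longrightarrow> (x, y) \<in> (edge_rel (induced_edges E U))\<^sup>*"
  unfolding is_subtree_def is_tree_def by (blast intro: graph_connected_imp_rtrancl)

lemma partition_on_unique:
  "partition_on S P \<Longrightarrow> B1 \<in> P \<Longrightarrow> B2 \<in> P \<Longrightarrow> x \<in> B1 \<Longrightarrow> x \<in> B2 \<Longrightarrow> B1 = B2"
  unfolding partition_on_def pairwise_def disjnt_def by blast

lemma partition_on_ex: "partition_on S P \<Longrightarrow> x \<in> S \<Longrightarrow> \<exists>B\<in>P. x \<in> B"
  unfolding partition_on_def by blast

lemma partition_on_subset: "partition_on S P \<Longrightarrow> B \<in> P \<Longrightarrow> B \<subseteq> S"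
  unfolding partition_on_def by blast

lemma partition_on_nonempty: "partition_on S P \<Longrightarrow> B \<in> P \<Longrightarrow> B \<noteq> {}"
  unfolding partition_on_def by blast

lemma
  assumes "is_corr V E (S, P)"
  shows corr_subtree: "is_subtree V E S" and corr_partition: "partition_on S P"
    and corr_block_subtree: "\<And>B. B \<in> P \<Longrightarrow> is_subtree V E B"
    and corr_subset: "S \<subseteq> V" and corr_nonempty: "S \<noteq> {}"
  using assms by (auto simp: is_corr_def is_subtree_def is_tree_def)

definition refines_on :: "'v set \<Rightarrow> 'v set set \<Rightarrow> 'v set set \<Rightarrow> bool" where
  "refines_on S P' P \<longleftrightarrow> (\<forall>B'\<in>P'. B' \<inter> S \<noteq> {} \<longrightarrow> (\<exists>B\<in>P. B' \<subseteq> B))"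

lemma corr_ge_imp_refines_on:
  assumes C': "is_corr V E (S', P')" and ge: "corr_ge E (S, P) (S', P')"
  shows "S \<subseteq> S' \<and> refines_on S P' P"
proof -
  obtain Q PQ where q: "is_corr P' (quot_edges E P') (Q, PQ)" "(S, P) = corr_comp (Q, PQ) (S', P')"
    using ge unfolding corr_ge_def by auto
  have SP: "S = \<Union>Q" "P = Union ` PQ"
    using q(2) by (auto simp: corr_comp_def)
  have QP: "Q \<subseteq> P'" "partition_on Q PQ"
    using q(1) by (auto simp: is_corr_def is_subtree_def)
  have "S \<subseteq> S'"
    using SP(1) QP(1) corr_partition[OF C'] by (auto simp: partition_on_def)
  moreover have "refines_on S P' P"
    unfolding refines_on_def
  proof (intro ballI impI)
    fix B' assume B': "B' \<in> P'" "B' \<inter> S \<noteq> {}"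
    then obtain x B'' where x: "x \<in> B'" "x \<in> B''" "B'' \<in> Q"
      using SP(1) by blast
    then have "B'' = B'"
      using partition_on_unique[OF corr_partition[OF C'] _ B'(1) x(2) x(1)] QP(1) by blast
    then have "B' \<in> Q"
      using x(3) by simp
    then obtain X where "X \<in> PQ" "B' \<in> X"
      using QP(2) unfolding partition_on_def by blast
    then show "\<exists>B\<in>P. B' \<subseteq> B"
      using SP(2) by blast
  qed
  ultimately show ?thesis ..
qed

lemma PiE_UNIV_extensional: "PiE I (\<lambda>_. UNIV) = extensional I"
  by (auto simp: PiE_def)

lemma openin_quotient_topology:
  "openin (quotient_topology X r) U \<longleftrightarrow>
     U \<subseteq> topspace X // r \<and> openin X {z \<in> topspace X. r `` {z} \<in> U}"
  unfolding quotient_topology_def by (simp only: topology_inverse'[OF istopology_quotient])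

lemma topspace_quotient_topology: "topspace (quotient_topology X r) = topspace X // r"
proof
  have "{z \<in> topspace X. r `` {z} \<in> topspace X // r} = topspace X"
    by (auto intro: quotientI)
  then show "topspace X // r \<subseteq> topspace (quotient_topology X r)"
    by (simp add: openin_quotient_topology openin_subset)
  show "topspace (quotient_topology X r) \<subseteq> topspace X // r"
    unfolding topspace_def openin_quotient_topology by blast
qed

lemma closedin_quotient_topology:
  "closedin (quotient_topology X r) F \<longleftrightarrow>
     F \<subseteq> topspace X // r \<and> closedin X {z \<in> topspace X. r `` {z} \<in> F}"
proof -
  have "{z \<in> topspace X. r `` {z} \<in> topspace X // r - F} = topspace X - {z \<in> topspace X. r `` {z} \<in> F}"
    by (auto intro: quotientI)
  then show ?thesis
    unfolding closedin_def topspace_quotient_topology openin_quotient_topology by auto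
qed

lemma continuous_map_quotient_class: "continuous_map X (quotient_topology X r) (\<lambda>z. r `` {z})"
  unfolding continuous_map_def topspace_quotient_topology openin_quotient_topology
  by (auto intro: quotientI)

lemma topspace_arb_space: "topspace (arb_space V E) = topspace (arb_disj V) // arb_rel V E"
  by (simp add: arb_space_def topspace_quotient_topology)

lemma closedin_arb_space:
  "closedin (arb_space V E) F \<longleftrightarrow>
     F \<subseteq> topspace (arb_disj V) // arb_rel V E \<and>
     closedin (arb_disj V) {z \<in> topspace (arb_disj V). arb_rel V E `` {z} \<in> F}"
  by (simp add: arb_space_def closedin_quotient_topology)

lemma continuous_map_arb_class: "continuous_map (arb_disj V) (arb_space V E) (\<lambda>z. arb_rel V E `` {z})"
  unfolding arb_space_def by (rule continuous_map_quotient_class)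

locale tree_graph =
  fixes V :: "'v set" and E :: "'v set set"
  assumes tree: "is_tree V E"
begin

lemma edges_ok: "edges_ok V E" using tree by (simp add: is_tree_def)
lemma finite_V: "finite V" using tree by (simp add: is_tree_def)
lemma connected: "graph_connected V E" using tree by (simp add: is_tree_def)

lemma edgeE: assumes "e \<in> E" obtains a b where "e = {a, b}" "a \<noteq> b" "a \<in> V" "b \<in> V"
proof -
  have "\<exists>a b. a \<noteq> b \<and> a \<in> V \<and> b \<in> V \<and> e = {a, b}"
    using assms edges_ok unfolding edges_ok_def by simp
  then show ?thesis using that by blast
qed

definition reach_without :: "'v set \<Rightarrow> 'v \<Rightarrow> 'v \<Rightarrow> bool" where
  "reach_without e a c \<longleftrightarrow> (a, c) \<in> (edge_rel (E - {e}))\<^sup>*"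

lemma reach_without_refl: "reach_without e a a" by (simp add: reach_without_def)

lemma tree_edge_not_rtrancl: "{a, b} \<in> E \<Longrightarrow> F \<subseteq> E - {{a, b}} \<Longrightarrow> (a, b) \<notin> (edge_rel F)\<^sup>*"
proof
  assume "{a, b} \<in> E" "F \<subseteq> E - {{a, b}}" "(a, b) \<in> (edge_rel F)\<^sup>*"
  from rtrancl_edge_rel_mono[OF this(2,3)] show False
    using tree_edge_is_bridge[OF tree \<open>{a,b} \<in> E\<close>] by simp
qed

lemma reach_without_split:
  assumes "(u, c) \<in> (edge_rel E)\<^sup>*" "e = {a, b}"
  shows "reach_without e u c \<or> reach_without e u a \<or> reach_without e u b"
  using assms(1)
proof (induction rule: rtrancl_induct)
  case base then show ?case by (simp add: reach_without_refl)
next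
  case (step c d)
  show ?case
  proof (cases "{c, d} = e")
    case True
    then have "c = a \<or> c = b" using assms(2) by (auto simp: doubleton_eq_iff)
    then show ?thesis using step.IH by blast
  next
    case False
    then have "(c, d) \<in> edge_rel (E - {e})" using step(2) by simp
    then show ?thesis
      using step.IH unfolding reach_without_def by (meson rtrancl.rtrancl_into_rtrancl)
  qed
qed

lemma reach_without_one_side:
  assumes e: "e \<in> E" "e = {a, b}" and al: "\<alpha> \<in> V"
  shows "reach_without e \<alpha> a \<or> reach_without e \<alpha> b" "\<not> (reach_without e \<alpha> a \<and> reach_without e \<alpha> b)"
proof -
  have "a \<in> V" using edges_okD[OF edges_ok] e by blast
  then have "(\<alpha>, a) \<in> (edge_rel E)\<^sup>*"
    using graph_connected_imp_rtrancl[OF connected al] by blast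
  from reach_without_split[OF this e(2)] show "reach_without e \<alpha> a \<or> reach_without e \<alpha> b"
    unfolding reach_without_def by (meson rtrancl_trans)
  show "\<not> (reach_without e \<alpha> a \<and> reach_without e \<alpha> b)"
  proof
    assume "reach_without e \<alpha> a \<and> reach_without e \<alpha> b"
    then have "(a, b) \<in> (edge_rel (E - {e}))\<^sup>*"
      unfolding reach_without_def by (meson rtrancl_edge_rel_sym rtrancl_trans)
    then show False using tree_edge_is_bridge[OF tree] e by simp
  qed
qed

definition far_end :: "'v \<Rightarrow> 'v set \<Rightarrow> 'v" where
  "far_end \<alpha> e = (THE c. c \<in> e \<and> \<not> reach_without e \<alpha> c)"

lemma far_end:
  assumes "e \<in> E" "\<alpha> \<in> V"
  shows "far_end \<alpha> e \<in> e" "\<not> reach_without e \<alpha> (far_end \<alpha> e)"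
    and "\<And>c. c \<in> e \<Longrightarrow> c \<noteq> far_end \<alpha> e \<Longrightarrow> reach_without e \<alpha> c"
    and "far_end \<alpha> e \<noteq> \<alpha>" "far_end \<alpha> e \<in> V"
proof -
  obtain a b where ab: "e = {a, b}" "a \<noteq> b" "a \<in> V" "b \<in> V" using edgeE[OF assms(1)] by blast
  note os = reach_without_one_side[OF assms(1) ab(1) assms(2)]
  have ex: "\<exists>!c. c \<in> e \<and> \<not> reach_without e \<alpha> c" using os ab by auto
  then have fp: "far_end \<alpha> e \<in> e \<and> \<not> reach_without e \<alpha> (far_end \<alpha> e)"
    unfolding far_end_def by (rule theI')
  then show "far_end \<alpha> e \<in> e" "\<not> reach_without e \<alpha> (far_end \<alpha> e)"
    by auto
  show "\<And>c. c \<in> e \<Longrightarrow> c \<noteq> far_end \<alpha> e \<Longrightarrow> reach_without e \<alpha> c"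
    using ex fp by blast
  show "far_end \<alpha> e \<noteq> \<alpha>"
    using fp reach_without_refl by metis
  show "far_end \<alpha> e \<in> V"
    using fp ab by auto
qed

lemma reach_without_avoiding:
  assumes "(a, d) \<in> (edge_rel (E - {e1}))\<^sup>*" "\<not> reach_without e1 a g"
  shows "(a, d) \<in> (edge_rel (E - {e1} - {f. g \<in> f}))\<^sup>*"
  using assms(1)
proof (induction rule: rtrancl_induct)
  case base then show ?case by simp
next
  case (step c d)
  have "c \<noteq> g" using step(1) assms(2) unfolding reach_without_def by blast
  moreover have "d \<noteq> g" using step(1,2) assms(2) unfolding reach_without_def
    by (meson rtrancl.rtrancl_into_rtrancl)
  ultimately have "(c, d) \<in> edge_rel (E - {e1} - {f. g \<in> f})" using step(2) by simp
  then show ?case using step.IH by (meson rtrancl.rtrancl_into_rtrancl)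
qed

lemma parent_edge_exists:
  assumes "\<alpha> \<in> V" "g \<in> V" "g \<noteq> \<alpha>"
  shows "\<exists>e. e \<in> E \<and> g \<in> e \<and> \<not> reach_without e \<alpha> g"
proof -
  have "(\<alpha>, g) \<in> (edge_rel E)\<^sup>*" using graph_connected_imp_rtrancl[OF connected assms(1,2)] .
  then obtain ys where p: "rtrancl_path (\<lambda>x y. (x, y) \<in> edge_rel E) \<alpha> ys g" "distinct (\<alpha> # ys)"
    by (rule rtrancl_imp_distinct_rtrancl_path)
  have "ys \<noteq> []" using p(1) assms(3) by (cases ys) (auto elim: rtrancl_path.cases)
  then obtain zs where zs: "ys = zs @ [g]" using rtrancl_path_last_nth[OF p(1)]
    by (metis append_butlast_last_id last_ConsR)
  show ?thesis
  proof (cases "zs = []")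
    case True
    then have eg: "{\<alpha>, g} \<in> E" using rtrancl_path_last_nth[OF p(1)] zs by fastforce
    have "\<not> reach_without {\<alpha>, g} \<alpha> g"
      using tree_edge_is_bridge[OF tree eg] unfolding reach_without_def by simp
    then show ?thesis using eg by blast
  next
    case False
    then obtain us d where us: "zs = us @ [d]" by (metis append_butlast_last_id)
    have p2: "rtrancl_path (\<lambda>x y. (x, y) \<in> edge_rel E) \<alpha> (us @ d # [g]) g"
      using p(1) zs us by simp
    from rtrancl_path_appendE[OF p2] obtain
        p3: "rtrancl_path (\<lambda>x y. (x, y) \<in> edge_rel E) \<alpha> (us @ [d]) d"
      and p4: "rtrancl_path (\<lambda>x y. (x, y) \<in> edge_rel E) d [g] g"
      by blast
    have ed: "{d, g} \<in> E" using p4 by (auto elim: rtrancl_path.cases)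
    have "g \<notin> set (\<alpha> # us @ [d])" using p(2) zs us by auto
    from rtrancl_path_avoiding[OF p3 this] have "(\<alpha>, d) \<in> (edge_rel (E - {f. g \<in> f}))\<^sup>*" .
    then have "reach_without {d, g} \<alpha> d"
      unfolding reach_without_def by (rule rtrancl_edge_rel_mono[rotated]) auto
    then have "\<not> reach_without {d, g} \<alpha> g"
      using reach_without_one_side[OF ed refl assms(1)] by blast
    then show ?thesis using ed by blast
  qed
qed

lemma parent_edge_unique:
  assumes "\<alpha> \<in> V" "e1 \<in> E" "g \<in> e1" "\<not> reach_without e1 \<alpha> g"
    and "e2 \<in> E" "g \<in> e2" "\<not> reach_without e2 \<alpha> g"
  shows "e1 = e2"
proof (rule ccontr)
  assume ne: "e1 \<noteq> e2"
  obtain a b where ab: "e1 = {a, b}" "a \<noteq> b" "a \<in> V" "b \<in> V" using edgeE[OF assms(2)] by blast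
  obtain d where d: "e1 = {g, d}" "d \<noteq> g" using ab assms(3) by auto
  have Rd: "reach_without e1 \<alpha> d"
    using reach_without_one_side[OF assms(2) d(1) assms(1)] assms(4) by blast
  from reach_without_avoiding[OF Rd[unfolded reach_without_def] assms(4)] have
    "(\<alpha>, d) \<in> (edge_rel (E - {e1} - {f. g \<in> f}))\<^sup>*" .
  then have "(\<alpha>, d) \<in> (edge_rel (E - {e2}))\<^sup>*"
    by (rule rtrancl_edge_rel_mono[rotated]) (use assms(6) in auto)
  moreover have "{d, g} = e1" using d by auto
  then have "(d, g) \<in> edge_rel (E - {e2})" using ne assms(2) by simp
  ultimately have "reach_without e2 \<alpha> g"
    unfolding reach_without_def by (meson rtrancl.rtrancl_into_rtrancl)
  then show False using assms(7) by simp
qed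

definition parent_edge :: "'v \<Rightarrow> 'v \<Rightarrow> 'v set" where
  "parent_edge \<alpha> g = (THE e. e \<in> E \<and> g \<in> e \<and> \<not> reach_without e \<alpha> g)"

lemma parent_edge:
  assumes "\<alpha> \<in> V" "g \<in> V" "g \<noteq> \<alpha>"
  shows "parent_edge \<alpha> g \<in> E" "g \<in> parent_edge \<alpha> g" "\<not> reach_without (parent_edge \<alpha> g) \<alpha> g"
    and "far_end \<alpha> (parent_edge \<alpha> g) = g"
proof -
  have "\<exists>!e. e \<in> E \<and> g \<in> e \<and> \<not> reach_without e \<alpha> g"
  proof (rule ex_ex1I)
    show "\<exists>e. e \<in> E \<and> g \<in> e \<and> \<not> reach_without e \<alpha> g"
      using parent_edge_exists[OF assms] .
    fix e1 e2
    assume "e1 \<in> E \<and> g \<in> e1 \<and> \<not> reach_without e1 \<alpha> g" "e2 \<in> E \<and> g \<in> e2 \<and> \<not> reach_without e2 \<alpha> g"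
    then show "e1 = e2"
      using parent_edge_unique[OF assms(1), of e1 g e2] by blast
  qed
  then have h: "parent_edge \<alpha> g \<in> E \<and> g \<in> parent_edge \<alpha> g \<and> \<not> reach_without (parent_edge \<alpha> g) \<alpha> g"
    unfolding parent_edge_def by (rule theI')
  then show "parent_edge \<alpha> g \<in> E" "g \<in> parent_edge \<alpha> g" "\<not> reach_without (parent_edge \<alpha> g) \<alpha> g"
    by auto
  show "far_end \<alpha> (parent_edge \<alpha> g) = g"
  proof (rule ccontr)
    assume "far_end \<alpha> (parent_edge \<alpha> g) \<noteq> g"
    then have "reach_without (parent_edge \<alpha> g) \<alpha> g"
      using far_end(3)[OF _ assms(1), of "parent_edge \<alpha> g" g] h by simp
    then show False using h by simp
  qed
qed

lemma parent_edge_eqI: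
  assumes "\<alpha> \<in> V" "e \<in> E" "g \<in> e" "\<not> reach_without e \<alpha> g"
  shows "parent_edge \<alpha> g = e"
proof -
  have g: "g \<in> V" "g \<noteq> \<alpha>"
    using assms edges_ok_subset[OF edges_ok] reach_without_refl by blast+
  show ?thesis
    using parent_edge_unique[OF assms(1) parent_edge(1,2,3)[OF assms(1) g] assms(2-4)] .
qed

lemma parent_edge_far_end: "e \<in> E \<Longrightarrow> \<alpha> \<in> V \<Longrightarrow> parent_edge \<alpha> (far_end \<alpha> e) = e"
  using parent_edge_eqI far_end by blast

lemma far_end_edge: "{\<alpha>, \<beta>} \<in> E \<Longrightarrow> far_end \<alpha> {\<alpha>, \<beta>} = \<beta>"
proof -
  assume e: "{\<alpha>, \<beta>} \<in> E"
  have ab: "\<alpha> \<noteq> \<beta>" "\<alpha> \<in> V" "\<beta> \<in> V" using edges_okD[OF edges_ok e] by auto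
  have "far_end \<alpha> {\<alpha>, \<beta>} \<in> {\<alpha>, \<beta>}" "far_end \<alpha> {\<alpha>, \<beta>} \<noteq> \<alpha>" using far_end[OF e ab(2)] by auto
  then show ?thesis by auto
qed

lemma parent_edge_edge: "{\<alpha>, \<beta>} \<in> E \<Longrightarrow> parent_edge \<alpha> \<beta> = {\<alpha>, \<beta>}"
  using parent_edge_far_end far_end_edge edges_okD[OF edges_ok] by metis

lemma reach_without_shift:
  assumes "{\<alpha>, \<beta>} \<in> E" "e \<noteq> {\<alpha>, \<beta>}"
  shows "reach_without e \<alpha> c \<longleftrightarrow> reach_without e \<beta> c"
proof -
  have "(\<alpha>, \<beta>) \<in> edge_rel (E - {e})" "(\<beta>, \<alpha>) \<in> edge_rel (E - {e})"
    using assms by (auto simp: insert_commute)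
  then show ?thesis unfolding reach_without_def by (meson converse_rtrancl_into_rtrancl)
qed

lemma far_end_shift:
  assumes "{\<alpha>, \<beta>} \<in> E" "e \<in> E" "e \<noteq> {\<alpha>, \<beta>}"
  shows "far_end \<alpha> e = far_end \<beta> e"
proof -
  have ab: "\<alpha> \<in> V" "\<beta> \<in> V" using edges_okD[OF edges_ok assms(1)] by auto
  note fa = far_end[OF assms(2) ab(1)] and fb = far_end[OF assms(2) ab(2)]
  note rs = reach_without_shift[OF assms(1,3)]
  show ?thesis using fa fb rs by metis
qed

lemma parent_edge_shift:
  assumes "{\<alpha>, \<beta>} \<in> E" "g \<in> V" "g \<noteq> \<alpha>" "g \<noteq> \<beta>"
  shows "parent_edge \<alpha> g = parent_edge \<beta> g"
proof -
  have ab: "\<alpha> \<in> V" "\<beta> \<in> V" using edges_okD[OF edges_ok assms(1)] by auto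
  note pa = parent_edge[OF ab(1) assms(2,3)]
  have "parent_edge \<alpha> g \<noteq> {\<alpha>, \<beta>}" using pa(2) assms(3,4) by auto
  then have "\<not> reach_without (parent_edge \<alpha> g) \<beta> g"
    using reach_without_shift[OF assms(1)] pa(3) by blast
  then show ?thesis using parent_edge_eqI[OF ab(2) pa(1,2)] by simp
qed

definition to_edge_coords :: "'v \<Rightarrow> ('v \<Rightarrow> real) \<Rightarrow> 'v set \<Rightarrow> real" where
  "to_edge_coords \<alpha> x = (\<lambda>e. if e \<in> E then x (far_end \<alpha> e) else undefined)"

definition of_edge_coords :: "'v \<Rightarrow> ('v set \<Rightarrow> real) \<Rightarrow> 'v \<Rightarrow> real" where
  "of_edge_coords \<alpha> w = (\<lambda>g. if g \<in> V - {\<alpha>} then w (parent_edge \<alpha> g) else undefined)"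

definition nonneg_edges :: "('v set \<Rightarrow> real) \<Rightarrow> 'v set set" where
  "nonneg_edges w = {e \<in> E. 0 \<le> w e}"

definition glued_component :: "'v \<Rightarrow> ('v set \<Rightarrow> real) \<Rightarrow> 'v set" where
  "glued_component \<alpha> w = {\<beta>. (\<alpha>, \<beta>) \<in> (edge_rel (nonneg_edges w))\<^sup>*}"

definition arb_point :: "'v \<Rightarrow> ('v set \<Rightarrow> real) \<Rightarrow> ('v \<times> ('v \<Rightarrow> real)) set" where
  "arb_point \<alpha> w = {(\<beta>, of_edge_coords \<beta> w) | \<beta>. \<beta> \<in> glued_component \<alpha> w}"

lemma topspace_arb_disj: "topspace (arb_disj V) = {(\<alpha>, x). \<alpha> \<in> V \<and> x \<in> extensional (V - {\<alpha>})}"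
  by (auto simp: arb_disj_def PiE_def)

lemma to_edge_coords_extensional: "to_edge_coords \<alpha> x \<in> extensional E"
  by (auto simp: to_edge_coords_def extensional_def)

lemma of_edge_coords_extensional: "of_edge_coords \<alpha> w \<in> extensional (V - {\<alpha>})"
  by (auto simp: of_edge_coords_def extensional_def)

lemma nonneg_edges_subset: "nonneg_edges w \<subseteq> E" by (auto simp: nonneg_edges_def)

lemma glued_component_subset: "\<alpha> \<in> V \<Longrightarrow> \<beta> \<in> glued_component \<alpha> w \<Longrightarrow> \<beta> \<in> V"
  unfolding glued_component_def
  using edges_ok_rtrancl_closed[OF edges_ok nonneg_edges_subset] by blast

lemma glued_component_self: "\<alpha> \<in> glued_component \<alpha> w" by (simp add: glued_component_def)

lemma to_of_edge_coords:
  assumes "\<alpha> \<in> V" "w \<in> extensional E"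
  shows "to_edge_coords \<alpha> (of_edge_coords \<alpha> w) = w"
proof
  fix e
  show "to_edge_coords \<alpha> (of_edge_coords \<alpha> w) e = w e"
  proof (cases "e \<in> E")
    case True
    then show ?thesis
      using far_end[OF True assms(1)] parent_edge_far_end[OF True assms(1)]
      by (simp add: to_edge_coords_def of_edge_coords_def)
  qed (use assms(2) in \<open>simp add: to_edge_coords_def extensional_def\<close>)
qed

lemma of_to_edge_coords:
  assumes "\<alpha> \<in> V" "x \<in> extensional (V - {\<alpha>})"
  shows "of_edge_coords \<alpha> (to_edge_coords \<alpha> x) = x"
proof
  fix g
  show "of_edge_coords \<alpha> (to_edge_coords \<alpha> x) g = x g"
  proof (cases "g \<in> V - {\<alpha>}")
    case True
    then show ?thesis
      using parent_edge[OF assms(1), of g] by (simp add: of_edge_coords_def to_edge_coords_def)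
  next
    case False
    then have "of_edge_coords \<alpha> (to_edge_coords \<alpha> x) g = undefined"
      unfolding of_edge_coords_def by (rule if_not_P)
    moreover have "x g = undefined"
      using assms(2) False by (simp add: extensional_def)
    ultimately show ?thesis
      by simp
  qed
qed

lemma of_edge_coords_edge: "{\<beta>, \<delta>} \<in> E \<Longrightarrow> of_edge_coords \<beta> w \<delta> = w {\<beta>, \<delta>}"
proof -
  assume e: "{\<beta>, \<delta>} \<in> E"
  have "\<beta> \<noteq> \<delta>" "\<delta> \<in> V" using edges_okD[OF edges_ok e] by auto
  then show ?thesis using parent_edge_edge[OF e] by (simp add: of_edge_coords_def)
qed

lemma arb_gen_edge_coords:
  assumes "((\<alpha>, x), (\<beta>, y)) \<in> arb_gen V E"
  shows "to_edge_coords \<alpha> x = to_edge_coords \<beta> y"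
    and "(\<alpha>, \<beta>) \<in> (edge_rel (nonneg_edges (to_edge_coords \<alpha> x)))\<^sup>*"
proof -
  have g: "{\<alpha>, \<beta>} \<in> E" "x \<beta> = y \<alpha>" "0 \<le> x \<beta>" "\<forall>\<gamma>\<in>V - {\<alpha>, \<beta>}. x \<gamma> = y \<gamma>"
    using assms by (auto simp: arb_gen_def)
  have ab: "\<alpha> \<noteq> \<beta>" "\<alpha> \<in> V" "\<beta> \<in> V" using edges_okD[OF edges_ok g(1)] by auto
  show "to_edge_coords \<alpha> x = to_edge_coords \<beta> y"
  proof
    fix e show "to_edge_coords \<alpha> x e = to_edge_coords \<beta> y e"
    proof (cases "e \<in> E")
      case False then show ?thesis by (simp add: to_edge_coords_def)
    next
      case True
      show ?thesis
      proof (cases "e = {\<alpha>, \<beta>}")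
        case True
        have "far_end \<beta> {\<alpha>, \<beta>} = \<alpha>"
          using far_end_edge[of \<beta> \<alpha>] g(1) by (simp add: insert_commute)
        then show ?thesis
          using True g(1,2) far_end_edge[OF g(1)] by (simp add: to_edge_coords_def)
      next
        case False
        have fe: "far_end \<alpha> e = far_end \<beta> e" using far_end_shift[OF g(1) \<open>e \<in> E\<close> False] .
        have "far_end \<alpha> e \<noteq> \<alpha>" "far_end \<beta> e \<noteq> \<beta>" "far_end \<alpha> e \<in> V"
          using far_end[OF \<open>e \<in> E\<close> ab(2)] far_end[OF \<open>e \<in> E\<close> ab(3)] by auto
        then have "x (far_end \<alpha> e) = y (far_end \<beta> e)" using g(4) fe by auto
        then show ?thesis using \<open>e \<in> E\<close> by (simp add: to_edge_coords_def)
      qed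
    qed
  qed
  have "to_edge_coords \<alpha> x {\<alpha>, \<beta>} = x \<beta>"
    using far_end_edge[OF g(1)] g(1) by (simp add: to_edge_coords_def)
  then have "{\<alpha>, \<beta>} \<in> nonneg_edges (to_edge_coords \<alpha> x)"
    using g(1,3) by (simp add: nonneg_edges_def)
  then show "(\<alpha>, \<beta>) \<in> (edge_rel (nonneg_edges (to_edge_coords \<alpha> x)))\<^sup>*" by auto
qed

definition glue_rel :: "(('v \<times> ('v \<Rightarrow> real)) \<times> ('v \<times> ('v \<Rightarrow> real))) set" where
  "glue_rel = {((\<alpha>, x), (\<beta>, y)). (\<alpha>, x) \<in> topspace (arb_disj V) \<and> (\<beta>, y) \<in> topspace (arb_disj V) \<and>
     to_edge_coords \<alpha> x = to_edge_coords \<beta> y \<and>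
     (\<alpha>, \<beta>) \<in> (edge_rel (nonneg_edges (to_edge_coords \<alpha> x)))\<^sup>*}"

lemma trans_glue_rel: "trans glue_rel"
proof (rule transI)
  fix a b c assume ab: "(a, b) \<in> glue_rel" and bc: "(b, c) \<in> glue_rel"
  obtain \<alpha> x \<beta> y \<gamma> z where abc: "a = (\<alpha>, x)" "b = (\<beta>, y)" "c = (\<gamma>, z)"
    by (cases a, cases b, cases c) auto
  show "(a, c) \<in> glue_rel"
    using ab bc unfolding abc glue_rel_def by (auto intro: rtrancl_trans)
qed

lemma glue_rel_sym: "(a, b) \<in> glue_rel \<Longrightarrow> (b, a) \<in> glue_rel"
proof -
  assume ab: "(a, b) \<in> glue_rel"
  obtain \<alpha> x \<beta> y where abc: "a = (\<alpha>, x)" "b = (\<beta>, y)" by (cases a, cases b) auto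
  show "(b, a) \<in> glue_rel"
    using ab unfolding abc glue_rel_def by (auto intro: rtrancl_edge_rel_sym)
qed

lemma arb_gen_subset_glue_rel: "arb_gen V E \<subseteq> glue_rel"
proof
  fix p assume p: "p \<in> arb_gen V E"
  obtain \<alpha> x \<beta> y where pp: "p = ((\<alpha>, x), (\<beta>, y))" by (cases p) auto
  have t: "(\<alpha>, x) \<in> topspace (arb_disj V)" "(\<beta>, y) \<in> topspace (arb_disj V)"
    using p pp by (auto simp: arb_gen_def)
  show "p \<in> glue_rel"
    using arb_gen_edge_coords[OF p[unfolded pp]] t pp by (simp add: glue_rel_def)
qed

lemma arb_rel_subset_glue_rel: "arb_rel V E \<subseteq> glue_rel"
proof -
  have "Id_on (topspace (arb_disj V)) \<subseteq> glue_rel" by (auto simp: glue_rel_def)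
  moreover have "arb_gen V E \<union> (arb_gen V E)\<inverse> \<subseteq> glue_rel"
    using arb_gen_subset_glue_rel glue_rel_sym by blast
  then have "(arb_gen V E \<union> (arb_gen V E)\<inverse>)\<^sup>+ \<subseteq> glue_rel\<^sup>+" using trancl_mono by blast
  then have "(arb_gen V E \<union> (arb_gen V E)\<inverse>)\<^sup>+ \<subseteq> glue_rel"
    using trancl_id[OF trans_glue_rel] by simp
  ultimately show ?thesis unfolding arb_rel_def by blast
qed

lemma of_edge_coords_arb_gen:
  assumes "{c, d} \<in> nonneg_edges w"
  shows "((c, of_edge_coords c w), (d, of_edge_coords d w)) \<in> arb_gen V E"
proof -
  have e: "{c, d} \<in> E" "0 \<le> w {c, d}" using assms by (auto simp: nonneg_edges_def)
  have cd: "c \<noteq> d" "c \<in> V" "d \<in> V" using edges_okD[OF edges_ok e(1)] by auto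
  have e': "{d, c} \<in> E" using e(1) by (simp add: insert_commute)
  have 1: "of_edge_coords c w d = w {c, d}" using of_edge_coords_edge[OF e(1)] .
  have 2: "of_edge_coords d w c = w {c, d}"
    using of_edge_coords_edge[OF e'] by (simp add: insert_commute)
  have 3: "\<forall>\<gamma>\<in>V - {c, d}. of_edge_coords c w \<gamma> = of_edge_coords d w \<gamma>"
    using parent_edge_shift[OF e(1)] by (auto simp: of_edge_coords_def)
  show ?thesis
    unfolding arb_gen_def using cd e 1 2 3 of_edge_coords_extensional topspace_arb_disj by auto
qed

lemma arb_rel_step: "(a, b) \<in> arb_rel V E \<Longrightarrow> (b, c) \<in> arb_gen V E \<Longrightarrow> (a, c) \<in> arb_rel V E"
  unfolding arb_rel_def by (auto intro: trancl_into_trancl)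

lemma glue_rel_subset_arb_rel: "glue_rel \<subseteq> arb_rel V E"
proof
  fix p assume p: "p \<in> glue_rel"
  obtain \<alpha> x \<beta> y where pp: "p = ((\<alpha>, x), (\<beta>, y))" by (cases p) auto
  have h: "\<alpha> \<in> V" "x \<in> extensional (V - {\<alpha>})" "\<beta> \<in> V" "y \<in> extensional (V - {\<beta>})"
    "to_edge_coords \<alpha> x = to_edge_coords \<beta> y"
    "(\<alpha>, \<beta>) \<in> (edge_rel (nonneg_edges (to_edge_coords \<alpha> x)))\<^sup>*"
    using p pp by (auto simp: glue_rel_def topspace_arb_disj)
  define w where "w = to_edge_coords \<alpha> x"
  have xw: "of_edge_coords \<alpha> w = x" using of_to_edge_coords h(1,2) w_def by simp
  have yw: "of_edge_coords \<beta> w = y" using of_to_edge_coords h(3,4) h(5) w_def by simp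
  have "((\<alpha>, x), (\<beta>, of_edge_coords \<beta> w)) \<in> arb_rel V E" using h(6)[folded w_def]
  proof (induction rule: rtrancl_induct)
    case base
    have "((\<alpha>, x), (\<alpha>, x)) \<in> Id_on (topspace (arb_disj V))"
      by (rule Id_onI) (simp add: topspace_arb_disj h(1,2))
    then show ?case using xw by (simp add: arb_rel_def)
  next
    case (step c d)
    from of_edge_coords_arb_gen[OF step(2)[simplified]] show ?case
      using arb_rel_step[OF step.IH] by blast
  qed
  then show "p \<in> arb_rel V E" using pp yw by simp
qed

lemma arb_rel_eq_glue_rel: "arb_rel V E = glue_rel"
  using arb_rel_subset_glue_rel glue_rel_subset_arb_rel by blast

lemma equiv_arb_rel: "equiv (topspace (arb_disj V)) (arb_rel V E)"
proof (rule equivI)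
  show "refl_on (topspace (arb_disj V)) (arb_rel V E)"
    unfolding arb_rel_eq_glue_rel
  proof (rule refl_onI)
    fix a assume "a \<in> topspace (arb_disj V)"
    moreover obtain \<alpha> x where "a = (\<alpha>, x)" by (cases a)
    ultimately show "(a, a) \<in> glue_rel" unfolding glue_rel_def by simp
  qed
  show "arb_rel V E \<subseteq> topspace (arb_disj V) \<times> topspace (arb_disj V)"
    unfolding arb_rel_eq_glue_rel
  proof
    fix p assume "p \<in> glue_rel"
    moreover obtain a b where "p = (a, b)" by (cases p)
    moreover obtain \<alpha> x \<beta> y where "a = (\<alpha>, x)" "b = (\<beta>, y)" by (cases a, cases b)
    ultimately show "p \<in> topspace (arb_disj V) \<times> topspace (arb_disj V)"
      unfolding glue_rel_def by simp
  qed
  show "sym (arb_rel V E)"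
    unfolding arb_rel_eq_glue_rel using glue_rel_sym by (auto intro: symI)
  show "trans (arb_rel V E)" unfolding arb_rel_eq_glue_rel by (rule trans_glue_rel)
qed

lemma arb_rel_class:
  assumes "\<alpha> \<in> V" "w \<in> extensional E"
  shows "arb_rel V E `` {(\<alpha>, of_edge_coords \<alpha> w)} = arb_point \<alpha> w"
proof -
  have to_edge_coords: "to_edge_coords \<alpha> (of_edge_coords \<alpha> w) = w"
    using to_of_edge_coords assms by simp
  show ?thesis
  proof (intro equalityI subsetI)
    fix q assume "q \<in> arb_rel V E `` {(\<alpha>, of_edge_coords \<alpha> w)}"
    moreover obtain \<beta> y where q: "q = (\<beta>, y)"
      by (cases q)
    ultimately have h: "\<beta> \<in> V" "y \<in> extensional (V - {\<beta>})" "to_edge_coords \<beta> y = w"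
      "(\<alpha>, \<beta>) \<in> (edge_rel (nonneg_edges w))\<^sup>*"
      using to_edge_coords by (auto simp: arb_rel_eq_glue_rel glue_rel_def topspace_arb_disj)
    then have "y = of_edge_coords \<beta> w"
      using of_to_edge_coords[OF h(1,2)] by simp
    then show "q \<in> arb_point \<alpha> w"
      using q h by (auto simp: arb_point_def glued_component_def)
  next
    fix q assume "q \<in> arb_point \<alpha> w"
    then obtain \<beta> where q: "q = (\<beta>, of_edge_coords \<beta> w)" "(\<alpha>, \<beta>) \<in> (edge_rel (nonneg_edges w))\<^sup>*"
      by (auto simp: arb_point_def glued_component_def)
    have "\<beta> \<in> V"
      using glued_component_subset[OF assms(1)] q(2) by (simp add: glued_component_def)
    then have "((\<alpha>, of_edge_coords \<alpha> w), q) \<in> glue_rel"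
      using q assms to_edge_coords to_of_edge_coords of_edge_coords_extensional
      by (simp add: glue_rel_def topspace_arb_disj)
    then show "q \<in> arb_rel V E `` {(\<alpha>, of_edge_coords \<alpha> w)}"
      unfolding arb_rel_eq_glue_rel by simp
  qed
qed

lemma arb_rel_classE:
  assumes "z \<in> topspace (arb_disj V)"
  obtains \<alpha> w where "\<alpha> \<in> V" "w \<in> extensional E" "z = (\<alpha>, of_edge_coords \<alpha> w)"
    "arb_rel V E `` {z} = arb_point \<alpha> w"
proof -
  obtain \<alpha> x where z: "z = (\<alpha>, x)" "\<alpha> \<in> V" "x \<in> extensional (V - {\<alpha>})"
    using assms by (auto simp: topspace_arb_disj)
  have xx: "x = of_edge_coords \<alpha> (to_edge_coords \<alpha> x)" using of_to_edge_coords z by simp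
  have cc: "arb_rel V E `` {z} = arb_point \<alpha> (to_edge_coords \<alpha> x)"
    using arb_rel_class[OF z(2) to_edge_coords_extensional, of \<alpha> x] xx z(1) by simp
  show ?thesis
    by (rule that[of \<alpha> "to_edge_coords \<alpha> x"]) (use z to_edge_coords_extensional xx cc in auto)
qed

lemma arb_point_eq_iff:
  assumes "\<alpha> \<in> V" "w \<in> extensional E" "\<beta> \<in> V" "w' \<in> extensional E"
  shows "arb_point \<alpha> w = arb_point \<beta> w' \<longleftrightarrow> w = w' \<and> \<beta> \<in> glued_component \<alpha> w"
proof -
  have t: "(\<alpha>, of_edge_coords \<alpha> w) \<in> topspace (arb_disj V)"
    "(\<beta>, of_edge_coords \<beta> w') \<in> topspace (arb_disj V)"
    using assms of_edge_coords_extensional by (auto simp: topspace_arb_disj)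
  have "arb_point \<alpha> w = arb_point \<beta> w' \<longleftrightarrow>
      ((\<alpha>, of_edge_coords \<alpha> w), (\<beta>, of_edge_coords \<beta> w')) \<in> glue_rel"
    using eq_equiv_class_iff[OF equiv_arb_rel t] arb_rel_class assms arb_rel_eq_glue_rel by simp
  also have "\<dots> \<longleftrightarrow> w = w' \<and> \<beta> \<in> glued_component \<alpha> w"
    using t to_of_edge_coords assms by (auto simp: glue_rel_def glued_component_def)
  finally show ?thesis .
qed

definition inner_edges :: "'v set set \<Rightarrow> 'v set set" where
  "inner_edges P = {e \<in> E. \<exists>B\<in>P. e \<subseteq> B}"

definition cut_edges :: "'v set \<Rightarrow> 'v set set \<Rightarrow> 'v set set" where
  "cut_edges S P = {e \<in> E. e \<subseteq> S} - inner_edges P"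

definition boundary_edges :: "'v set \<Rightarrow> 'v set set" where
  "boundary_edges S = {e \<in> E. e \<inter> S \<noteq> {} \<and> \<not> e \<subseteq> S}"

text \<open>In edge coordinates based at a vertex of \<open>S\<close>, the stratum of \<open>(S, P)\<close> is the box
  \<open>stratum_box S P\<close> and its closure is \<open>stratum_cbox S P\<close>.\<close>

definition stratum_box :: "'v set \<Rightarrow> 'v set set \<Rightarrow> ('v set \<Rightarrow> real) set" where
  "stratum_box S P = {w \<in> extensional E. (\<forall>e\<in>inner_edges P. 0 < w e) \<and>
     (\<forall>e\<in>cut_edges S P. w e = 0) \<and> (\<forall>e\<in>boundary_edges S. w e < 0)}"

definition stratum_cbox :: "'v set \<Rightarrow> 'v set set \<Rightarrow> ('v set \<Rightarrow> real) set" where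
  "stratum_cbox S P = {w \<in> extensional E. (\<forall>e\<in>inner_edges P. 0 \<le> w e) \<and>
     (\<forall>e\<in>cut_edges S P. w e = 0) \<and> (\<forall>e\<in>boundary_edges S. w e \<le> 0)}"

definition contracted_rel :: "'v \<Rightarrow> ('v set \<Rightarrow> real) \<Rightarrow> ('v \<times> 'v) set" where
  "contracted_rel \<alpha> w = {(c, d). c \<in> glued_component \<alpha> w \<and> d \<in> glued_component \<alpha> w \<and>
     {c, d} \<in> E \<and> 0 < w {c, d}}"

lemma stratum_box_subset: "stratum_box S P \<subseteq> stratum_cbox S P"
  unfolding stratum_box_def stratum_cbox_def by (auto simp: less_imp_le)

lemma inner_edges_subset: "partition_on S P \<Longrightarrow> e \<in> inner_edges P \<Longrightarrow> e \<subseteq> S"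
  unfolding inner_edges_def using partition_on_subset by blast

lemma edge_classes_disjoint:
  assumes "partition_on S P"
  shows "e \<in> cut_edges S P \<Longrightarrow> e \<notin> inner_edges P" "e \<in> boundary_edges S \<Longrightarrow> e \<notin> inner_edges P"
    "e \<in> boundary_edges S \<Longrightarrow> e \<notin> cut_edges S P"
  using inner_edges_subset[OF assms] by (auto simp: cut_edges_def boundary_edges_def)

lemma S_pt_arb_point: "\<alpha> \<in> V \<Longrightarrow> S_pt V (arb_point \<alpha> w) = glued_component \<alpha> w"
  unfolding S_pt_def arb_point_def using glued_component_subset by blast

lemma contr_rel_arb_point: "\<alpha> \<in> V \<Longrightarrow> contr_rel V E (arb_point \<alpha> w) = contracted_rel \<alpha> w"
proof -
  assume a: "\<alpha> \<in> V"
  have "(c, d) \<in> contr_rel V E (arb_point \<alpha> w) \<longleftrightarrow> (c, d) \<in> contracted_rel \<alpha> w" for c d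
  proof -
    have "(\<exists>u v. (c, u) \<in> arb_point \<alpha> w \<and> (d, v) \<in> arb_point \<alpha> w \<and> u d = v c \<and> 0 < u d) \<longleftrightarrow>
          c \<in> glued_component \<alpha> w \<and> d \<in> glued_component \<alpha> w \<and>
          of_edge_coords c w d = of_edge_coords d w c \<and> 0 < of_edge_coords c w d"
      by (auto simp: arb_point_def)
    moreover have "{c, d} \<in> E \<Longrightarrow> of_edge_coords c w d = w {c, d} \<and> of_edge_coords d w c = w {c, d}"
      using of_edge_coords_edge[of c d w] of_edge_coords_edge[of d c w] by (simp add: insert_commute)
    ultimately show ?thesis
      unfolding contr_rel_def contracted_rel_def S_pt_arb_point[OF a] by auto
  qed
  then show ?thesis by auto
qed

lemma corr_pt_arb_point:
  "\<alpha> \<in> V \<Longrightarrow>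
     corr_pt V E (arb_point \<alpha> w) = (glued_component \<alpha> w, glued_component \<alpha> w // (contracted_rel \<alpha> w)\<^sup>*)"
  by (simp add: corr_pt_def S_pt_arb_point contr_rel_arb_point)

lemma contracted_rel_sym: "(c, d) \<in> (contracted_rel \<alpha> w)\<^sup>* \<Longrightarrow> (d, c) \<in> (contracted_rel \<alpha> w)\<^sup>*"
proof -
  have "(contracted_rel \<alpha> w)\<inverse> = contracted_rel \<alpha> w"
    by (auto simp: contracted_rel_def insert_commute)
  then show "(c, d) \<in> (contracted_rel \<alpha> w)\<^sup>* \<Longrightarrow> (d, c) \<in> (contracted_rel \<alpha> w)\<^sup>*"
    by (metis rtrancl_converseI)
qed

lemma inner_edge_positive:
  assumes cls: "S // (contracted_rel \<alpha> w)\<^sup>* = P" and e: "e \<in> inner_edges P"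
  shows "0 < w e"
proof (rule ccontr)
  assume "\<not> 0 < w e"
  then have sub: "contracted_rel \<alpha> w \<subseteq> edge_rel (E - {e})"
    by (auto simp: contracted_rel_def)
  obtain B where B: "B \<in> P" "e \<subseteq> B" "e \<in> E"
    using e by (auto simp: inner_edges_def)
  obtain a b where ab: "e = {a, b}"
    using edgeE[OF B(3)] by metis
  obtain g where "B = (contracted_rel \<alpha> w)\<^sup>* `` {g}"
    using B(1) cls by (auto elim: quotientE)
  then have "(g, a) \<in> (contracted_rel \<alpha> w)\<^sup>*" "(g, b) \<in> (contracted_rel \<alpha> w)\<^sup>*"
    using B(2) ab by auto
  then have "(a, b) \<in> (contracted_rel \<alpha> w)\<^sup>*"
    using contracted_rel_sym by (meson rtrancl_trans)
  then have "(a, b) \<in> (edge_rel (E - {e}))\<^sup>*"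
    using rtrancl_mono[OF sub] by blast
  then show False
    using tree_edge_is_bridge[OF tree] B(3) ab by simp
qed

lemma cut_edge_zero:
  assumes comp: "glued_component \<alpha> w = S" and cls: "S // (contracted_rel \<alpha> w)\<^sup>* = P"
    and e: "e \<in> cut_edges S P"
  shows "w e = 0"
proof -
  have e1: "e \<in> E" "e \<subseteq> S" "e \<notin> inner_edges P"
    using e by (auto simp: cut_edges_def)
  obtain a b where ab: "e = {a, b}"
    using edgeE[OF e1(1)] by metis
  have abS: "a \<in> S" "b \<in> S"
    using e1 ab by auto
  have "0 \<le> w e"
  proof (rule ccontr)
    assume "\<not> 0 \<le> w e"
    then have "nonneg_edges w \<subseteq> E - {e}"
      by (auto simp: nonneg_edges_def)
    moreover have "(a, b) \<in> (edge_rel (nonneg_edges w))\<^sup>*"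
      using abS comp unfolding glued_component_def by (meson mem_Collect_eq rtrancl_edge_rel_sym rtrancl_trans)
    ultimately show False
      using tree_edge_not_rtrancl[of a b "nonneg_edges w"] e1(1) ab by simp
  qed
  moreover have "\<not> 0 < w e"
  proof
    assume "0 < w e"
    then have "(a, b) \<in> contracted_rel \<alpha> w"
      using abS comp e1(1) ab by (simp add: contracted_rel_def)
    moreover have "(contracted_rel \<alpha> w)\<^sup>* `` {a} \<in> P"
      using quotientI[OF abS(1), of "(contracted_rel \<alpha> w)\<^sup>*"] cls by simp
    ultimately have "e \<in> inner_edges P"
      using e1 ab by (auto simp: inner_edges_def)
    then show False
      using e1 by simp
  qed
  ultimately show ?thesis by simp
qed

lemma boundary_edge_negative:
  assumes comp: "glued_component \<alpha> w = S" and e: "e \<in> boundary_edges S"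
  shows "w e < 0"
proof (rule ccontr)
  assume "\<not> w e < 0"
  have e1: "e \<in> E" "e \<inter> S \<noteq> {}" "\<not> e \<subseteq> S"
    using e by (auto simp: boundary_edges_def)
  then obtain a b where "a \<in> e" "a \<in> S" "b \<in> e" "b \<notin> S"
    by blast
  then have ab: "e = {a, b}" "a \<in> S" "b \<notin> S"
    using e1(1) by (auto elim!: edgeE)
  have "(a, b) \<in> edge_rel (nonneg_edges w)"
    using \<open>\<not> w e < 0\<close> e ab(1) by (simp add: nonneg_edges_def boundary_edges_def)
  then have "b \<in> glued_component \<alpha> w"
    using ab(2) comp unfolding glued_component_def by (meson mem_Collect_eq rtrancl.rtrancl_into_rtrancl)
  then show False
    using ab(3) comp by simp
qed

lemma corr_pt_imp_stratum_box:
  assumes "w \<in> extensional E" "glued_component \<alpha> w = S" "S // (contracted_rel \<alpha> w)\<^sup>* = P"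
  shows "w \<in> stratum_box S P"
  unfolding stratum_box_def
  using assms inner_edge_positive[OF assms(3)] cut_edge_zero[OF assms(2,3)]
    boundary_edge_negative[OF assms(2)]
  by blast

lemma glued_component_subset_stratum:
  assumes "\<alpha> \<in> S" "w \<in> stratum_box S P"
  shows "glued_component \<alpha> w \<subseteq> S"
proof
  fix x assume "x \<in> glued_component \<alpha> w"
  then have "(\<alpha>, x) \<in> (edge_rel (nonneg_edges w))\<^sup>*"
    by (simp add: glued_component_def)
  then show "x \<in> S"
  proof (induction rule: rtrancl_induct)
    case (step c d)
    have e: "{c, d} \<in> E" "0 \<le> w {c, d}"
      using step(2) by (auto simp: nonneg_edges_def)
    show ?case
    proof (rule ccontr)
      assume "d \<notin> S"
      then have "{c, d} \<in> boundary_edges S"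
        using e step(3) by (auto simp: boundary_edges_def)
      then show False
        using assms(2) e(2) by (auto simp: stratum_box_def)
    qed
  qed (use assms(1) in simp)
qed

context
  fixes S P assumes C: "is_corr V E (S, P)"
begin

lemma subset_glued_component:
  assumes "\<alpha> \<in> S" "w \<in> stratum_cbox S P"
  shows "S \<subseteq> glued_component \<alpha> w"
proof
  fix x assume "x \<in> S"
  have "induced_edges E S \<subseteq> nonneg_edges w"
  proof
    fix e assume e: "e \<in> induced_edges E S"
    then have "e \<in> inner_edges P \<or> e \<in> cut_edges S P"
      by (auto simp: induced_edges_def cut_edges_def)
    then have "0 \<le> w e"
      using assms(2) by (auto simp: stratum_cbox_def)
    then show "e \<in> nonneg_edges w"
      using e by (simp add: nonneg_edges_def induced_edges_def)
  qed
  moreover have "(\<alpha>, x) \<in> (edge_rel (induced_edges E S))\<^sup>*"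
    using subtree_rtrancl[OF corr_subtree[OF C] assms(1) \<open>x \<in> S\<close>] .
  ultimately have "(\<alpha>, x) \<in> (edge_rel (nonneg_edges w))\<^sup>*"
    by (rule rtrancl_edge_rel_mono)
  then show "x \<in> glued_component \<alpha> w"
    by (simp add: glued_component_def)
qed

lemma glued_component_eq: "\<alpha> \<in> S \<Longrightarrow> w \<in> stratum_box S P \<Longrightarrow> glued_component \<alpha> w = S"
  using glued_component_subset_stratum subset_glued_component stratum_box_subset by blast

lemma contracted_rel_eq:
  assumes "\<alpha> \<in> S" "w \<in> stratum_box S P"
  shows "contracted_rel \<alpha> w = edge_rel (inner_edges P)"
proof -
  have iff: "c \<in> S \<and> d \<in> S \<and> {c, d} \<in> E \<and> 0 < w {c, d} \<longleftrightarrow> {c, d} \<in> inner_edges P" for c d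
  proof
    assume h: "c \<in> S \<and> d \<in> S \<and> {c, d} \<in> E \<and> 0 < w {c, d}"
    then have "{c, d} \<notin> cut_edges S P"
      using assms(2) by (auto simp: stratum_box_def)
    then show "{c, d} \<in> inner_edges P"
      using h by (simp add: cut_edges_def)
  next
    assume h: "{c, d} \<in> inner_edges P"
    then show "c \<in> S \<and> d \<in> S \<and> {c, d} \<in> E \<and> 0 < w {c, d}"
      using inner_edges_subset[OF corr_partition[OF C] h] assms(2)
      by (auto simp: inner_edges_def stratum_box_def)
  qed
  show ?thesis
    unfolding contracted_rel_def glued_component_eq[OF assms] edge_rel_def iff ..
qed

lemma inner_edges_class:
  assumes B: "B \<in> P" "x \<in> B"
  shows "(edge_rel (inner_edges P))\<^sup>* `` {x} = B"
proof (intro equalityI subsetI)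
  fix y assume "y \<in> (edge_rel (inner_edges P))\<^sup>* `` {x}"
  then have "(x, y) \<in> (edge_rel (inner_edges P))\<^sup>*" by simp
  then show "y \<in> B"
  proof (induction rule: rtrancl_induct)
    case (step c d)
    then obtain B' where B': "B' \<in> P" "{c, d} \<subseteq> B'"
      by (auto simp: inner_edges_def)
    have "B' = B"
      using partition_on_unique[OF corr_partition[OF C] B'(1) B(1), of c] B' step(3) by simp
    then show ?case
      using B' by simp
  qed (use B in simp)
next
  fix y assume "y \<in> B"
  have "induced_edges E B \<subseteq> inner_edges P"
    using B(1) unfolding induced_edges_def inner_edges_def by blast
  moreover have "(x, y) \<in> (edge_rel (induced_edges E B))\<^sup>*"
    using subtree_rtrancl[OF corr_block_subtree[OF C B(1)] B(2) \<open>y \<in> B\<close>] .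
  ultimately have "(x, y) \<in> (edge_rel (inner_edges P))\<^sup>*"
    by (rule rtrancl_edge_rel_mono)
  then show "y \<in> (edge_rel (inner_edges P))\<^sup>* `` {x}"
    by simp
qed

lemma contracted_classes:
  assumes "\<alpha> \<in> S" "w \<in> stratum_box S P"
  shows "S // (contracted_rel \<alpha> w)\<^sup>* = P"
proof (intro equalityI subsetI)
  fix X assume "X \<in> S // (contracted_rel \<alpha> w)\<^sup>*"
  then obtain x where x: "x \<in> S" "X = (edge_rel (inner_edges P))\<^sup>* `` {x}"
    unfolding contracted_rel_eq[OF assms] by (auto elim: quotientE)
  then obtain B where "B \<in> P" "x \<in> B"
    using partition_on_ex[OF corr_partition[OF C]] by blast
  then show "X \<in> P"
    using inner_edges_class x(2) by simp
next
  fix B assume B: "B \<in> P"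
  then obtain x where x: "x \<in> B"
    using partition_on_nonempty[OF corr_partition[OF C]] by blast
  then have "(edge_rel (inner_edges P))\<^sup>* `` {x} \<in> S // (edge_rel (inner_edges P))\<^sup>*"
    using partition_on_subset[OF corr_partition[OF C] B] by (blast intro: quotientI)
  then show "B \<in> S // (contracted_rel \<alpha> w)\<^sup>*"
    using inner_edges_class[OF B x] contracted_rel_eq[OF assms] by simp
qed

lemma corr_pt_arb_point_iff:
  assumes "\<alpha> \<in> V" "w \<in> extensional E"
  shows "corr_pt V E (arb_point \<alpha> w) = (S, P) \<longleftrightarrow> \<alpha> \<in> S \<and> w \<in> stratum_box S P"
proof
  assume "corr_pt V E (arb_point \<alpha> w) = (S, P)"
  then have "glued_component \<alpha> w = S" "S // (contracted_rel \<alpha> w)\<^sup>* = P"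
    using corr_pt_arb_point[OF assms(1)] by auto
  then show "\<alpha> \<in> S \<and> w \<in> stratum_box S P"
    using corr_pt_imp_stratum_box[OF assms(2)] glued_component_self by blast
next
  assume "\<alpha> \<in> S \<and> w \<in> stratum_box S P"
  then show "corr_pt V E (arb_point \<alpha> w) = (S, P)"
    using corr_pt_arb_point[OF assms(1)] glued_component_eq contracted_classes by simp
qed

end

lemma finite_E: "finite E"
proof -
  have "E \<subseteq> Pow V"
    using edges_ok_subset[OF edges_ok] by blast
  then show ?thesis
    using finite_V by (meson finite_Pow_iff finite_subset)
qed

lemma arb_rel_chart_class:
  assumes "\<beta> \<in> V" "x \<in> extensional (V - {\<beta>})"
  shows "arb_rel V E `` {(\<beta>, x)} = arb_point \<beta> (to_edge_coords \<beta> x)"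
  using arb_rel_class[OF assms(1) to_edge_coords_extensional[of \<beta> x]] of_to_edge_coords[OF assms]
  by simp

lemma topspace_arb_space_iff:
  "c \<in> topspace (arb_space V E) \<longleftrightarrow> (\<exists>\<alpha> w. \<alpha> \<in> V \<and> w \<in> extensional E \<and> c = arb_point \<alpha> w)"
proof
  assume "c \<in> topspace (arb_space V E)"
  then obtain z where z: "z \<in> topspace (arb_disj V)" "c = arb_rel V E `` {z}"
    unfolding topspace_arb_space by (auto elim: quotientE)
  then show "\<exists>\<alpha> w. \<alpha> \<in> V \<and> w \<in> extensional E \<and> c = arb_point \<alpha> w"
    by (metis arb_rel_classE)
next
  assume "\<exists>\<alpha> w. \<alpha> \<in> V \<and> w \<in> extensional E \<and> c = arb_point \<alpha> w"
  then obtain \<alpha> w where a: "\<alpha> \<in> V" "w \<in> extensional E" "c = arb_point \<alpha> w"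
    by blast
  have "(\<alpha>, of_edge_coords \<alpha> w) \<in> topspace (arb_disj V)"
    using a of_edge_coords_extensional by (simp add: topspace_arb_disj)
  then show "c \<in> topspace (arb_space V E)"
    unfolding topspace_arb_space using quotientI arb_rel_class[OF a(1,2)] a(3) by metis
qed

lemma continuous_of_edge_coords:
  assumes "\<alpha> \<in> V"
  shows "continuous_map (powertop_real E) (powertop_real (V - {\<alpha>})) (of_edge_coords \<alpha>)"
  unfolding continuous_map_componentwise
proof (intro conjI ballI)
  show "of_edge_coords \<alpha> ` topspace (powertop_real E) \<subseteq> extensional (V - {\<alpha>})"
    using of_edge_coords_extensional by blast
  fix g assume g: "g \<in> V - {\<alpha>}"
  then have "parent_edge \<alpha> g \<in> E"
    using parent_edge(1)[OF assms] by simp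
  then show "continuous_map (powertop_real E) euclideanreal (\<lambda>w. of_edge_coords \<alpha> w g)"
    using g continuous_map_product_projection[of "parent_edge \<alpha> g" E "\<lambda>_. euclideanreal"]
    by (simp add: of_edge_coords_def)
qed

lemma continuous_to_edge_coords:
  assumes "\<beta> \<in> V"
  shows "continuous_map (powertop_real (V - {\<beta>})) (powertop_real E) (to_edge_coords \<beta>)"
  unfolding continuous_map_componentwise
proof (intro conjI ballI)
  show "to_edge_coords \<beta> ` topspace (powertop_real (V - {\<beta>})) \<subseteq> extensional E"
    using to_edge_coords_extensional by blast
  fix e assume e: "e \<in> E"
  then have "far_end \<beta> e \<in> V - {\<beta>}"
    using far_end[OF e assms] by simp
  then show "continuous_map (powertop_real (V - {\<beta>})) euclideanreal (\<lambda>x. to_edge_coords \<beta> x e)"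
    using e continuous_map_product_projection[of "far_end \<beta> e" "V - {\<beta>}" "\<lambda>_. euclideanreal"]
    by (simp add: to_edge_coords_def)
qed

lemma continuous_arb_point:
  assumes "\<alpha> \<in> V"
  shows "continuous_map (powertop_real E) (arb_space V E) (\<lambda>w. arb_rel V E `` {(\<alpha>, of_edge_coords \<alpha> w)})"
proof -
  have "continuous_map (powertop_real E) (arb_disj V) (Pair \<alpha> \<circ> of_edge_coords \<alpha>)"
    unfolding arb_disj_def
    by (rule continuous_map_compose[OF continuous_of_edge_coords[OF assms]])
      (rule continuous_map_component_injection[OF assms, of "\<lambda>\<alpha>. powertop_real (V - {\<alpha>})", simplified])
  then have "continuous_map (powertop_real E) (arb_space V E)
      ((\<lambda>z. arb_rel V E `` {z}) \<circ> (Pair \<alpha> \<circ> of_edge_coords \<alpha>))"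
    using continuous_map_arb_class by (rule continuous_map_compose)
  then show ?thesis
    by (simp add: o_def)
qed

definition box_factor :: "'v set \<Rightarrow> 'v set set \<Rightarrow> 'v set \<Rightarrow> real set" where
  "box_factor S P e = (if e \<in> inner_edges P then {0<..} else if e \<in> cut_edges S P then {0}
     else if e \<in> boundary_edges S then {..<0} else UNIV)"

definition cbox_factor :: "'v set \<Rightarrow> 'v set set \<Rightarrow> 'v set \<Rightarrow> real set" where
  "cbox_factor S P e = (if e \<in> inner_edges P then {0..} else if e \<in> cut_edges S P then {0}
     else if e \<in> boundary_edges S then {..0} else UNIV)"

lemma edge_classes_subset: "inner_edges P \<subseteq> E" "cut_edges S P \<subseteq> E" "boundary_edges S \<subseteq> E"
  by (auto simp: inner_edges_def cut_edges_def boundary_edges_def)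

lemma stratum_box_PiE:
  assumes "partition_on S P"
  shows "stratum_box S P = PiE E (box_factor S P)"
proof -
  have "w e \<in> box_factor S P e \<longleftrightarrow> (e \<in> inner_edges P \<longrightarrow> 0 < w e) \<and>
      (e \<in> cut_edges S P \<longrightarrow> w e = 0) \<and> (e \<in> boundary_edges S \<longrightarrow> w e < 0)" for w e
    using edge_classes_disjoint[OF assms, of e] by (auto simp: box_factor_def)
  then show ?thesis
    unfolding stratum_box_def PiE_def Pi_def using edge_classes_subset by blast
qed

lemma stratum_cbox_PiE:
  assumes "partition_on S P"
  shows "stratum_cbox S P = PiE E (cbox_factor S P)"
proof -
  have "w e \<in> cbox_factor S P e \<longleftrightarrow> (e \<in> inner_edges P \<longrightarrow> 0 \<le> w e) \<and>
      (e \<in> cut_edges S P \<longrightarrow> w e = 0) \<and> (e \<in> boundary_edges S \<longrightarrow> w e \<le> 0)" for w e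
    using edge_classes_disjoint[OF assms, of e] by (auto simp: cbox_factor_def)
  then show ?thesis
    unfolding stratum_cbox_def PiE_def Pi_def using edge_classes_subset by blast
qed

lemma closure_stratum_box:
  assumes "partition_on S P"
  shows "powertop_real E closure_of stratum_box S P = stratum_cbox S P"
proof -
  have "closure (box_factor S P e) = cbox_factor S P e" for e
    by (simp add: box_factor_def cbox_factor_def closure_closed)
  then show ?thesis
    unfolding stratum_box_PiE[OF assms] stratum_cbox_PiE[OF assms] closure_of_product_topology by simp
qed

lemma closedin_stratum_cbox:
  assumes "partition_on S P"
  shows "closedin (powertop_real E) (stratum_cbox S P)"
  unfolding stratum_cbox_PiE[OF assms] closedin_product_topology by (simp add: cbox_factor_def)

lemma closedin_nonneg_rtrancl:
  "closedin (powertop_real E) {w \<in> extensional E. (\<beta>, \<gamma>) \<in> (edge_rel (nonneg_edges w))\<^sup>*}"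
proof -
  define Fs where "Fs = {F. F \<subseteq> E \<and> (\<beta>, \<gamma>) \<in> (edge_rel F)\<^sup>*}"
  define orthant where "orthant F = PiE E (\<lambda>e. if e \<in> F then {0..} else (UNIV :: real set))" for F
  have "{w \<in> extensional E. (\<beta>, \<gamma>) \<in> (edge_rel (nonneg_edges w))\<^sup>*} = (\<Union>F\<in>Fs. orthant F)"
  proof (intro equalityI subsetI)
    fix w assume "w \<in> {w \<in> extensional E. (\<beta>, \<gamma>) \<in> (edge_rel (nonneg_edges w))\<^sup>*}"
    then have "nonneg_edges w \<in> Fs" "w \<in> orthant (nonneg_edges w)"
      using nonneg_edges_subset by (auto simp: Fs_def orthant_def nonneg_edges_def PiE_def Pi_def)
    then show "w \<in> (\<Union>F\<in>Fs. orthant F)"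
      by blast
  next
    fix w assume "w \<in> (\<Union>F\<in>Fs. orthant F)"
    then obtain F where F: "F \<subseteq> E" "(\<beta>, \<gamma>) \<in> (edge_rel F)\<^sup>*" "w \<in> orthant F"
      by (auto simp: Fs_def)
    then have "F \<subseteq> nonneg_edges w"
      by (force simp: orthant_def nonneg_edges_def PiE_def Pi_def)
    then have "(\<beta>, \<gamma>) \<in> (edge_rel (nonneg_edges w))\<^sup>*"
      using F(2) by (rule rtrancl_edge_rel_mono)
    then show "w \<in> {w \<in> extensional E. (\<beta>, \<gamma>) \<in> (edge_rel (nonneg_edges w))\<^sup>*}"
      using F(3) by (simp add: orthant_def PiE_def)
  qed
  moreover have "finite Fs"
    unfolding Fs_def using finite_E by (auto intro: finite_subset[of _ "Pow E"])
  moreover have "closedin (powertop_real E) (orthant F)" for F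
    unfolding orthant_def closedin_product_topology by auto
  ultimately show ?thesis
    by (auto intro: closedin_Union)
qed

context
  fixes S P assumes C: "is_corr V E (S, P)"
begin

definition closed_stratum :: "('v \<times> ('v \<Rightarrow> real)) set set" where
  "closed_stratum = {arb_point \<alpha> w | \<alpha> w. \<alpha> \<in> S \<and> w \<in> stratum_cbox S P}"

lemma stratum_iff:
  "c \<in> stratum V E (S, P) \<longleftrightarrow> (\<exists>\<alpha> w. \<alpha> \<in> S \<and> w \<in> stratum_box S P \<and> c = arb_point \<alpha> w)"
proof
  assume "c \<in> stratum V E (S, P)"
  then have c: "c \<in> topspace (arb_space V E)" "corr_pt V E c = (S, P)"
    by (auto simp: stratum_def)
  then obtain \<alpha> w where a: "\<alpha> \<in> V" "w \<in> extensional E" "c = arb_point \<alpha> w"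
    using topspace_arb_space_iff by blast
  then show "\<exists>\<alpha> w. \<alpha> \<in> S \<and> w \<in> stratum_box S P \<and> c = arb_point \<alpha> w"
    using corr_pt_arb_point_iff[OF C a(1,2)] c(2) by blast
next
  assume "\<exists>\<alpha> w. \<alpha> \<in> S \<and> w \<in> stratum_box S P \<and> c = arb_point \<alpha> w"
  then obtain \<alpha> w where a: "\<alpha> \<in> S" "w \<in> stratum_box S P" "c = arb_point \<alpha> w"
    by blast
  have av: "\<alpha> \<in> V" "w \<in> extensional E"
    using a corr_subset[OF C] by (auto simp: stratum_box_def)
  then have "c \<in> topspace (arb_space V E)"
    using topspace_arb_space_iff a(3) by blast
  moreover have "corr_pt V E c = (S, P)"
    using corr_pt_arb_point_iff[OF C av] a by simp
  ultimately show "c \<in> stratum V E (S, P)"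
    by (simp add: stratum_def)
qed

lemma stratum_subset_closed_stratum: "stratum V E (S, P) \<subseteq> closed_stratum"
  unfolding closed_stratum_def using stratum_iff stratum_box_subset[of S P] by blast

lemma closed_stratum_subset_closure: "closed_stratum \<subseteq> arb_space V E closure_of stratum V E (S, P)"
proof
  fix c assume "c \<in> closed_stratum"
  then obtain \<alpha> w where a: "\<alpha> \<in> S" "w \<in> stratum_cbox S P" "c = arb_point \<alpha> w"
    by (auto simp: closed_stratum_def)
  have av: "\<alpha> \<in> V"
    using a corr_subset[OF C] by auto
  let ?f = "\<lambda>w. arb_rel V E `` {(\<alpha>, of_edge_coords \<alpha> w)}"
  have "?f ` stratum_box S P \<subseteq> stratum V E (S, P)"
  proof
    fix c assume "c \<in> ?f ` stratum_box S P"
    then obtain v where v: "v \<in> stratum_box S P" "c = ?f v"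
      by blast
    then have "c = arb_point \<alpha> v"
      using arb_rel_class[OF av, of v] by (simp add: stratum_box_def)
    then show "c \<in> stratum V E (S, P)"
      using stratum_iff a(1) v(1) by blast
  qed
  then have "arb_space V E closure_of (?f ` stratum_box S P) \<subseteq> arb_space V E closure_of stratum V E (S, P)"
    by (rule closure_of_mono)
  moreover have "?f w \<in> ?f ` (powertop_real E closure_of stratum_box S P)"
    using a(2) closure_stratum_box[OF corr_partition[OF C]] by simp
  moreover have "?f w = c"
    using arb_rel_class[OF av, of w] a(2,3) by (simp add: stratum_cbox_def)
  ultimately show "c \<in> arb_space V E closure_of stratum V E (S, P)"
    using continuous_map_image_closure_subset[OF continuous_arb_point[OF av]] by blast
qed

lemma arb_point_in_closed_stratum_iff:
  assumes "\<beta> \<in> V" "w \<in> extensional E" "\<alpha>0 \<in> S"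
  shows "arb_point \<beta> w \<in> closed_stratum \<longleftrightarrow>
           w \<in> stratum_cbox S P \<and> (\<beta>, \<alpha>0) \<in> (edge_rel (nonneg_edges w))\<^sup>*"
proof
  assume "arb_point \<beta> w \<in> closed_stratum"
  then obtain \<alpha> w' where aw: "\<alpha> \<in> S" "w' \<in> stratum_cbox S P" "arb_point \<beta> w = arb_point \<alpha> w'"
    by (auto simp: closed_stratum_def)
  have "\<alpha> \<in> V" "w' \<in> extensional E"
    using aw(1,2) corr_subset[OF C] by (auto simp: stratum_cbox_def)
  then have w: "w = w'" "\<alpha> \<in> glued_component \<beta> w"
    using arb_point_eq_iff[OF assms(1,2)] aw(3) by auto
  moreover have "\<alpha>0 \<in> glued_component \<alpha> w"
    using subset_glued_component[OF C aw(1)] aw(2) assms(3) w(1) by blast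
  ultimately show "w \<in> stratum_cbox S P \<and> (\<beta>, \<alpha>0) \<in> (edge_rel (nonneg_edges w))\<^sup>*"
    using aw(2) unfolding glued_component_def by (auto intro: rtrancl_trans)
next
  assume w: "w \<in> stratum_cbox S P \<and> (\<beta>, \<alpha>0) \<in> (edge_rel (nonneg_edges w))\<^sup>*"
  have "\<alpha>0 \<in> V"
    using assms(3) corr_subset[OF C] by auto
  then have "arb_point \<beta> w = arb_point \<alpha>0 w"
    using arb_point_eq_iff[OF assms(1,2) _ assms(2)] w by (simp add: glued_component_def)
  then show "arb_point \<beta> w \<in> closed_stratum"
    using assms(3) w by (auto simp: closed_stratum_def)
qed

lemma closedin_closed_stratum: "closedin (arb_space V E) closed_stratum"
proof -
  obtain \<alpha>0 where a0: "\<alpha>0 \<in> S"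
    using corr_nonempty[OF C] by blast
  let ?pre = "{z \<in> topspace (arb_disj V). arb_rel V E `` {z} \<in> closed_stratum}"
  have "closedin (powertop_real (V - {\<beta>})) {x. (\<beta>, x) \<in> ?pre}" if b: "\<beta> \<in> V" for \<beta>
  proof -
    let ?K = "stratum_cbox S P \<inter> {w \<in> extensional E. (\<beta>, \<alpha>0) \<in> (edge_rel (nonneg_edges w))\<^sup>*}"
    have "(\<beta>, x) \<in> ?pre \<longleftrightarrow> x \<in> topspace (powertop_real (V - {\<beta>})) \<and> to_edge_coords \<beta> x \<in> ?K" for x
    proof (cases "x \<in> extensional (V - {\<beta>})")
      case True
      then show ?thesis
        using arb_rel_chart_class[OF b True] to_edge_coords_extensional b
          arb_point_in_closed_stratum_iff[OF b to_edge_coords_extensional a0]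
        by (simp add: topspace_arb_disj PiE_UNIV_extensional)
    qed (simp add: topspace_arb_disj PiE_UNIV_extensional)
    then have slice: "{x. (\<beta>, x) \<in> ?pre} = {x \<in> topspace (powertop_real (V - {\<beta>})). to_edge_coords \<beta> x \<in> ?K}"
      by blast
    have "closedin (powertop_real E) ?K"
      using closedin_stratum_cbox[OF corr_partition[OF C]] closedin_nonneg_rtrancl by (rule closedin_Int)
    then show ?thesis
      unfolding slice by (rule closedin_continuous_map_preimage[OF continuous_to_edge_coords[OF b]])
  qed
  then have "closedin (arb_disj V) ?pre"
    unfolding arb_disj_def closedin_sum_topology by (auto simp: arb_disj_def)
  moreover have "closed_stratum \<subseteq> topspace (arb_disj V) // arb_rel V E"
    unfolding topspace_arb_space[symmetric] closed_stratum_def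
    using topspace_arb_space_iff corr_subset[OF C] by (auto simp: stratum_cbox_def)
  ultimately show ?thesis
    unfolding closedin_arb_space by simp
qed

lemma closure_stratum: "arb_space V E closure_of stratum V E (S, P) = closed_stratum"
  using closure_of_minimal[OF stratum_subset_closed_stratum closedin_closed_stratum]
    closed_stratum_subset_closure by blast

end

context
  fixes S' P' assumes C': "is_corr V E (S', P')"
begin

definition block_of :: "'v \<Rightarrow> 'v set" where
  "block_of x = (THE B. B \<in> P' \<and> x \<in> B)"

lemma block_of: "x \<in> S' \<Longrightarrow> block_of x \<in> P' \<and> x \<in> block_of x"
proof -
  assume x: "x \<in> S'"
  have "\<exists>!B. B \<in> P' \<and> x \<in> B"
    using partition_on_ex[OF corr_partition[OF C'] x] partition_on_unique[OF corr_partition[OF C']] by blast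
  then show ?thesis
    unfolding block_of_def by (rule theI')
qed

lemma block_of_eq:
  assumes "B \<in> P'" "x \<in> B"
  shows "block_of x = B"
proof -
  have "x \<in> S'"
    using partition_on_subset[OF corr_partition[OF C'] assms(1)] assms(2) by blast
  then show ?thesis
    using block_of partition_on_unique[OF corr_partition[OF C'] _ assms(1)] assms(2) by blast
qed

lemma quot_edges_iff:
  "{X, Y} \<in> quot_edges E P' \<longleftrightarrow> X \<in> P' \<and> Y \<in> P' \<and> X \<noteq> Y \<and> (\<exists>a\<in>X. \<exists>b\<in>Y. {a, b} \<in> E)"
proof
  assume "{X, Y} \<in> quot_edges E P'"
  then obtain B1 B2 where h: "{X, Y} = {B1, B2}" "B1 \<in> P'" "B2 \<in> P'" "B1 \<noteq> B2"
      "\<exists>a\<in>B1. \<exists>b\<in>B2. {a, b} \<in> E"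
    unfolding quot_edges_def by blast
  then have "(X = B1 \<and> Y = B2) \<or> (X = B2 \<and> Y = B1)"
    by (simp add: doubleton_eq_iff)
  then show "X \<in> P' \<and> Y \<in> P' \<and> X \<noteq> Y \<and> (\<exists>a\<in>X. \<exists>b\<in>Y. {a, b} \<in> E)"
  proof
    assume "X = B1 \<and> Y = B2"
    then show ?thesis
      using h by blast
  next
    assume "X = B2 \<and> Y = B1"
    moreover obtain a b where "a \<in> B1" "b \<in> B2" "{b, a} \<in> E"
      using h(5) by (auto simp: insert_commute)
    ultimately show ?thesis
      using h by blast
  qed
next
  assume "X \<in> P' \<and> Y \<in> P' \<and> X \<noteq> Y \<and> (\<exists>a\<in>X. \<exists>b\<in>Y. {a, b} \<in> E)"
  then show "{X, Y} \<in> quot_edges E P'"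
    unfolding quot_edges_def by blast
qed

lemma block_rtrancl_without:
  assumes "C \<in> P'" "x \<in> C" "y \<in> C" "\<not> {a, b} \<subseteq> C"
  shows "(x, y) \<in> (edge_rel (E - {{a, b}}))\<^sup>*"
proof -
  have "induced_edges E C \<subseteq> E - {{a, b}}"
    using assms(4) by (auto simp: induced_edges_def)
  moreover have "(x, y) \<in> (edge_rel (induced_edges E C))\<^sup>*"
    using subtree_rtrancl[OF corr_block_subtree[OF C' assms(1)] assms(2,3)] .
  ultimately show ?thesis
    by (rule rtrancl_edge_rel_mono)
qed

lemma quot_path_lift:
  assumes ab: "{a, b} \<in> E" "a \<in> B1" "b \<in> B2" and B: "B1 \<in> P'" "B2 \<in> P'" "B1 \<noteq> B2"
    and path: "(B1, D) \<in> (edge_rel (quot_edges E P' - {{B1, B2}}))\<^sup>*"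
  shows "\<forall>x\<in>B1. \<forall>y\<in>D. (x, y) \<in> (edge_rel (E - {{a, b}}))\<^sup>*"
proof -
  have not_in_block: "\<not> {a, b} \<subseteq> C" if "C \<in> P'" for C
    using block_of_eq[OF that] block_of_eq[OF B(1) ab(2)] block_of_eq[OF B(2) ab(3)] B(3) by auto
  show ?thesis
    using path
  proof (induction rule: rtrancl_induct)
    case base
    show ?case
      using block_rtrancl_without[OF B(1) _ _ not_in_block[OF B(1)]] by blast
  next
    case (step D D')
    then have q: "{D, D'} \<in> quot_edges E P'" "{D, D'} \<noteq> {B1, B2}"
      by auto
    then obtain d d' where dd: "D \<in> P'" "D' \<in> P'" "d \<in> D" "d' \<in> D'" "{d, d'} \<in> E"
      using quot_edges_iff by blast
    have "{D, D'} = block_of ` {d, d'}" "{B1, B2} = block_of ` {a, b}"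
      using block_of_eq dd B ab by auto
    then have "{d, d'} \<noteq> {a, b}"
      using q(2) by metis
    then have "(d, d') \<in> edge_rel (E - {{a, b}})"
      using dd(5) by simp
    moreover have "(d', y) \<in> (edge_rel (E - {{a, b}}))\<^sup>*" if "y \<in> D'" for y
      using block_rtrancl_without[OF dd(2,4) that not_in_block[OF dd(2)]] .
    ultimately show ?case
      using step.IH dd(3) by (meson rtrancl.rtrancl_into_rtrancl rtrancl_trans)
  qed
qed

lemma quot_edge_is_bridge:
  assumes "{B1, B2} \<in> quot_edges E P'"
  shows "(B1, B2) \<notin> (edge_rel (quot_edges E P' - {{B1, B2}}))\<^sup>*"
proof
  assume "(B1, B2) \<in> (edge_rel (quot_edges E P' - {{B1, B2}}))\<^sup>*"
  moreover obtain a b where "B1 \<in> P'" "B2 \<in> P'" "B1 \<noteq> B2" "a \<in> B1" "b \<in> B2" "{a, b} \<in> E"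
    using assms quot_edges_iff by blast
  ultimately have "(a, b) \<in> (edge_rel (E - {{a, b}}))\<^sup>*"
    using quot_path_lift by blast
  then show False
    using tree_edge_is_bridge[OF tree \<open>{a, b} \<in> E\<close>] by simp
qed

definition blocks_in :: "'v set \<Rightarrow> 'v set set" where
  "blocks_in U = {B \<in> P'. B \<subseteq> U}"

lemma finite_blocks: "finite P'"
proof -
  have "\<Union>P' = S'"
    using corr_partition[OF C'] by (simp add: partition_on_def)
  moreover have "finite S'"
    using corr_subset[OF C'] finite_V finite_subset by blast
  ultimately show ?thesis
    by (metis finite_UnionD)
qed

lemma Union_blocks_in:
  assumes "U \<subseteq> S'" "\<And>x. x \<in> U \<Longrightarrow> block_of x \<subseteq> U"
  shows "\<Union>(blocks_in U) = U"
proof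
  show "U \<subseteq> \<Union>(blocks_in U)"
  proof
    fix x assume "x \<in> U"
    then have "block_of x \<in> blocks_in U" "x \<in> block_of x"
      using assms block_of[of x] by (auto simp: blocks_in_def)
    then show "x \<in> \<Union>(blocks_in U)"
      by blast
  qed
qed (auto simp: blocks_in_def)

lemma rtrancl_block_of:
  assumes U: "U \<subseteq> S'" "\<And>x. x \<in> U \<Longrightarrow> block_of x \<subseteq> U"
    and "(x, y) \<in> (edge_rel (induced_edges E U))\<^sup>*" "x \<in> U"
  shows "(block_of x, block_of y) \<in> (edge_rel (induced_edges (quot_edges E P') (blocks_in U)))\<^sup>*"
  using assms(3,4)
proof (induction rule: rtrancl_induct)
  case (step c d)
  have cd: "{c, d} \<in> E" "c \<in> U" "d \<in> U"
    using step(2) by (auto simp: induced_edges_def)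
  have blocks: "block_of c \<in> blocks_in U" "c \<in> block_of c" "block_of d \<in> blocks_in U" "d \<in> block_of d"
    using block_of U cd(2,3) by (auto simp: blocks_in_def)
  show ?case
  proof (cases "block_of c = block_of d")
    case False
    then have "{block_of c, block_of d} \<in> quot_edges E P'"
      using quot_edges_iff blocks cd(1) by (auto simp: blocks_in_def)
    then have "(block_of c, block_of d) \<in> edge_rel (induced_edges (quot_edges E P') (blocks_in U))"
      using blocks by (simp add: induced_edges_def)
    then show ?thesis
      using step.IH step(4) by (meson rtrancl.rtrancl_into_rtrancl)
  qed (use step in simp)
qed simp

lemma blocks_in_subtree:
  assumes U: "U \<subseteq> S'" "U \<noteq> {}" "\<And>x. x \<in> U \<Longrightarrow> block_of x \<subseteq> U" "is_subtree V E U"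
  shows "is_subtree P' (quot_edges E P') (blocks_in U)"
proof -
  let ?F = "induced_edges (quot_edges E P') (blocks_in U)"
  have sub: "blocks_in U \<subseteq> P'"
    by (auto simp: blocks_in_def)
  have ne: "blocks_in U \<noteq> {}"
    using U(2) Union_blocks_in[OF U(1,3)] by auto
  have fin: "finite (blocks_in U)"
    using finite_blocks sub finite_subset by blast
  have eok: "edges_ok (blocks_in U) ?F"
    unfolding edges_ok_def
  proof
    fix e assume e: "e \<in> ?F"
    then obtain X Y where "e = {X, Y}" "X \<noteq> Y"
      unfolding induced_edges_def quot_edges_def by blast
    then show "\<exists>X Y. X \<noteq> Y \<and> X \<in> blocks_in U \<and> Y \<in> blocks_in U \<and> e = {X, Y}"
      using e by (auto simp: induced_edges_def)
  qed
  have conn: "graph_connected (blocks_in U) ?F"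
  proof (rule graph_connectedI_rtrancl)
    show "\<Union>?F \<subseteq> blocks_in U"
      by (auto simp: induced_edges_def)
    fix X Y assume XY: "X \<in> blocks_in U" "Y \<in> blocks_in U"
    then have XY': "X \<in> P'" "Y \<in> P'" "X \<subseteq> U" "Y \<subseteq> U"
      by (auto simp: blocks_in_def)
    obtain x y where xy: "x \<in> X" "y \<in> Y"
      using partition_on_nonempty[OF corr_partition[OF C']] XY'(1,2) by blast
    then have "(x, y) \<in> (edge_rel (induced_edges E U))\<^sup>*"
      using subtree_rtrancl[OF U(4)] XY' by blast
    then have "(block_of x, block_of y) \<in> (edge_rel ?F)\<^sup>*"
      using rtrancl_block_of[OF U(1,3)] xy XY' by blast
    then show "(X, Y) \<in> (edge_rel ?F)\<^sup>*"
      using block_of_eq[OF XY'(1) xy(1)] block_of_eq[OF XY'(2) xy(2)] by simp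
  qed
  have acyc: "acyclic_graph (blocks_in U) ?F"
  proof (rule acyclic_graphI_bridges)
    fix X Y assume "{X, Y} \<in> ?F"
    then have q: "{X, Y} \<in> quot_edges E P'"
      by (simp add: induced_edges_def)
    show "(X, Y) \<notin> (edge_rel (?F - {{X, Y}}))\<^sup>*"
    proof
      assume "(X, Y) \<in> (edge_rel (?F - {{X, Y}}))\<^sup>*"
      moreover have "?F - {{X, Y}} \<subseteq> quot_edges E P' - {{X, Y}}"
        by (auto simp: induced_edges_def)
      ultimately have "(X, Y) \<in> (edge_rel (quot_edges E P' - {{X, Y}}))\<^sup>*"
        by (rule rtrancl_edge_rel_mono[rotated])
      then show False
        using quot_edge_is_bridge[OF q] by simp
    qed
  qed
  show ?thesis
    unfolding is_subtree_def is_tree_def using sub ne fin eok conn acyc by simp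
qed

end

context
  fixes S P S' P' assumes C: "is_corr V E (S, P)" and C': "is_corr V E (S', P')"
begin

lemma block_of_subset_block:
  assumes "S \<subseteq> S'" "refines_on S P' P" "B \<in> P" "x \<in> B"
  shows "block_of P' x \<subseteq> B"
proof -
  have xS: "x \<in> S"
    using partition_on_subset[OF corr_partition[OF C] assms(3)] assms(4) by blast
  then have x: "block_of P' x \<in> P'" "x \<in> block_of P' x"
    using block_of[OF C'] assms(1) by auto
  then obtain B'' where B'': "B'' \<in> P" "block_of P' x \<subseteq> B''"
    using assms(2) xS unfolding refines_on_def by blast
  then have "B'' = B"
    using partition_on_unique[OF corr_partition[OF C] B''(1) assms(3)] x(2) assms(4) by blast
  then show ?thesis
    using B''(2) by simp
qed

lemma partition_on_blocks_in:
  assumes "S \<subseteq> S'" "refines_on S P' P"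
  shows "partition_on (blocks_in P' S) (blocks_in P' ` P)"
proof (rule partition_onI)
  show "\<Union>(blocks_in P' ` P) = blocks_in P' S"
  proof (intro equalityI subsetI)
    fix X assume "X \<in> \<Union>(blocks_in P' ` P)"
    then show "X \<in> blocks_in P' S"
      using partition_on_subset[OF corr_partition[OF C]] by (auto simp: blocks_in_def[OF C'])
  next
    fix X assume "X \<in> blocks_in P' S"
    then have X: "X \<in> P'" "X \<subseteq> S"
      by (auto simp: blocks_in_def[OF C'])
    obtain x where x: "x \<in> X"
      using partition_on_nonempty[OF corr_partition[OF C'] X(1)] by blast
    then obtain B where B: "B \<in> P" "x \<in> B"
      using partition_on_ex[OF corr_partition[OF C]] X(2) by blast
    then have "X \<subseteq> B"
      using block_of_subset_block[OF assms] block_of_eq[OF C' X(1) x] by metis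
    then show "X \<in> \<Union>(blocks_in P' ` P)"
      using B X by (auto simp: blocks_in_def[OF C'])
  qed
next
  fix X Y assume "X \<in> blocks_in P' ` P" "Y \<in> blocks_in P' ` P" "X \<noteq> Y"
  then obtain B1 B2 where B: "B1 \<in> P" "B2 \<in> P" "B1 \<noteq> B2" "X = blocks_in P' B1" "Y = blocks_in P' B2"
    by blast
  show "disjnt X Y"
  proof (rule ccontr)
    assume "\<not> disjnt X Y"
    then obtain Z where "Z \<in> P'" "Z \<subseteq> B1" "Z \<subseteq> B2"
      using B(4,5) by (auto simp: disjnt_def blocks_in_def[OF C'])
    moreover obtain z where "z \<in> Z"
      using partition_on_nonempty[OF corr_partition[OF C'] \<open>Z \<in> P'\<close>] by blast
    ultimately have "B1 = B2"
      using partition_on_unique[OF corr_partition[OF C] B(1,2), of z] by blast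
    then show False
      using B(3) by simp
  qed
next
  have "\<Union>(blocks_in P' B) = B" if "B \<in> P" for B
    using partition_on_subset[OF corr_partition[OF C] that] assms(1)
    by (intro Union_blocks_in[OF C'] block_of_subset_block[OF assms that]) auto
  then show "{} \<notin> blocks_in P' ` P"
    using partition_on_nonempty[OF corr_partition[OF C]] by fastforce
qed

lemma corr_ge_of_refines_on:
  assumes sub: "S \<subseteq> S'" and ref: "refines_on S P' P"
  shows "corr_ge E (S, P) (S', P')"
proof -
  have blocks_S: "block_of P' x \<subseteq> S" if x: "x \<in> S" for x
  proof -
    obtain B where "B \<in> P" "x \<in> B"
      using partition_on_ex[OF corr_partition[OF C] x] by blast
    then show ?thesis
      using block_of_subset_block[OF sub ref] partition_on_subset[OF corr_partition[OF C]] by blast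
  qed
  have block_S': "B \<subseteq> S'" if "B \<in> P" for B
    using partition_on_subset[OF corr_partition[OF C] that] sub by blast
  have Union_B: "\<Union>(blocks_in P' B) = B" if "B \<in> P" for B
    by (rule Union_blocks_in[OF C' block_S'[OF that] block_of_subset_block[OF sub ref that]])
  let ?q = "(blocks_in P' S, blocks_in P' ` P)"
  have "is_subtree P' (quot_edges E P') (blocks_in P' S)"
    using blocks_in_subtree[OF C' sub corr_nonempty[OF C] blocks_S corr_subtree[OF C]] .
  moreover have "is_subtree P' (quot_edges E P') X" if "X \<in> blocks_in P' ` P" for X
  proof -
    obtain B where B: "B \<in> P" "X = blocks_in P' B"
      using \<open>X \<in> blocks_in P' ` P\<close> by blast
    show ?thesis
      unfolding B(2)
      using blocks_in_subtree[OF C' block_S'[OF B(1)] partition_on_nonempty[OF corr_partition[OF C] B(1)]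
          block_of_subset_block[OF sub ref B(1)] corr_block_subtree[OF C B(1)]] .
  qed
  ultimately have "is_corr P' (quot_edges E P') ?q"
    unfolding is_corr_def using partition_on_blocks_in[OF sub ref] by simp
  moreover have "Union ` blocks_in P' ` P = P"
    using Union_B by (force simp: image_image)
  then have "(S, P) = corr_comp ?q (S', P')"
    using Union_blocks_in[OF C' sub blocks_S] by (simp add: corr_comp_def)
  ultimately show ?thesis
    unfolding corr_ge_def by auto
qed

lemma corr_ge_iff_refines_on: "corr_ge E (S, P) (S', P') \<longleftrightarrow> S \<subseteq> S' \<and> refines_on S P' P"
  using corr_ge_imp_refines_on[OF C'] corr_ge_of_refines_on by blast

end

lemma positive_edge_inner:
  assumes "w \<in> stratum_cbox S P" "{c, d} \<in> E" "c \<in> S" "0 < w {c, d}"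
  shows "{c, d} \<in> inner_edges P"
proof -
  have "d \<in> S"
  proof (rule ccontr)
    assume "d \<notin> S"
    then have "{c, d} \<in> boundary_edges S"
      using assms(2,3) by (auto simp: boundary_edges_def)
    then show False
      using assms(1,4) by (auto simp: stratum_cbox_def)
  qed
  show ?thesis
  proof (rule ccontr)
    assume "{c, d} \<notin> inner_edges P"
    then have "{c, d} \<in> cut_edges S P"
      using assms(2,3) \<open>d \<in> S\<close> by (auto simp: cut_edges_def)
    then show False
      using assms(1,4) by (auto simp: stratum_cbox_def)
  qed
qed

lemma refines_on_if_box_cbox:
  assumes C: "is_corr V E (S, P)" and C': "is_corr V E (S', P')"
    and w: "w \<in> stratum_box S' P'" "w \<in> stratum_cbox S P"
  shows "refines_on S P' P"
  unfolding refines_on_def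
proof (intro ballI impI)
  fix B' assume B': "B' \<in> P'" "B' \<inter> S \<noteq> {}"
  then obtain x where x: "x \<in> B'" "x \<in> S"
    by blast
  obtain B where B: "B \<in> P" "x \<in> B"
    using partition_on_ex[OF corr_partition[OF C] x(2)] by blast
  have "y \<in> B" if "y \<in> B'" for y
  proof -
    have "(x, y) \<in> (edge_rel (induced_edges E B'))\<^sup>*"
      using subtree_rtrancl[OF corr_block_subtree[OF C' B'(1)] x(1) that] .
    then show "y \<in> B"
    proof (induction rule: rtrancl_induct)
      case (step c d)
      have cd: "{c, d} \<in> E" "{c, d} \<subseteq> B'"
        using step(2) by (auto simp: induced_edges_def)
      then have "0 < w {c, d}"
        using B'(1) w(1) by (auto simp: stratum_box_def inner_edges_def)
      moreover have "c \<in> S"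
        using step(3) partition_on_subset[OF corr_partition[OF C] B(1)] by blast
      ultimately obtain B'' where "B'' \<in> P" "{c, d} \<subseteq> B''"
        using positive_edge_inner[OF w(2) cd(1)] by (auto simp: inner_edges_def)
      then show ?case
        using partition_on_unique[OF corr_partition[OF C] _ B(1)] step(3) by blast
    qed (use B in simp)
  qed
  then show "\<exists>B\<in>P. B' \<subseteq> B"
    using B by blast
qed

lemma stratum_box_subset_cbox:
  assumes P: "partition_on S P" and sub: "S \<subseteq> S'" and ref: "refines_on S P' P"
    and w: "w \<in> stratum_box S' P'"
  shows "w \<in> stratum_cbox S P"
proof -
  have inner': "e \<in> inner_edges P" if e: "e \<in> inner_edges P'" "e \<inter> S \<noteq> {}" for e
  proof -
    obtain B' where B': "e \<in> E" "B' \<in> P'" "e \<subseteq> B'"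
      using e(1) by (auto simp: inner_edges_def)
    then obtain B where "B \<in> P" "B' \<subseteq> B"
      using ref e(2) unfolding refines_on_def by blast
    then show ?thesis
      using B' by (auto simp: inner_edges_def)
  qed
  have "0 \<le> w e" if e: "e \<in> inner_edges P" for e
  proof -
    have "e \<subseteq> S'" "e \<in> E"
      using inner_edges_subset[OF P e] sub e by (auto simp: inner_edges_def)
    then have "e \<in> inner_edges P' \<or> e \<in> cut_edges S' P'"
      by (auto simp: cut_edges_def)
    then show ?thesis
      using w unfolding stratum_box_def by (auto simp: less_imp_le)
  qed
  moreover have "w e = 0" if e: "e \<in> cut_edges S P" for e
  proof -
    have e1: "e \<in> E" "e \<subseteq> S" "e \<notin> inner_edges P"
      using e by (auto simp: cut_edges_def)
    moreover obtain a b where "e = {a, b}"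
      using edgeE[OF e1(1)] by metis
    ultimately have "e \<inter> S \<noteq> {}"
      by auto
    then have "e \<in> cut_edges S' P'"
      using e1 sub inner' by (auto simp: cut_edges_def)
    then show ?thesis
      using w by (simp add: stratum_box_def)
  qed
  moreover have "w e \<le> 0" if e: "e \<in> boundary_edges S" for e
  proof -
    have e1: "e \<in> E" "e \<inter> S \<noteq> {}" "\<not> e \<subseteq> S"
      using e by (auto simp: boundary_edges_def)
    then have "e \<notin> inner_edges P"
      using inner_edges_subset[OF P] by blast
    then have "e \<in> cut_edges S' P' \<or> e \<in> boundary_edges S'"
      using e1 sub inner' by (auto simp: cut_edges_def boundary_edges_def)
    then show ?thesis
      using w by (auto simp: stratum_box_def)
  qed
  ultimately show ?thesis
    using w by (simp add: stratum_box_def stratum_cbox_def)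
qed

context
  fixes S P S' P' assumes C: "is_corr V E (S, P)" and C': "is_corr V E (S', P')"
begin

lemma refines_on_if_stratum_meets_closure:
  assumes "c \<in> stratum V E (S', P')" "c \<in> closed_stratum S P"
  shows "S \<subseteq> S' \<and> refines_on S P' P"
proof -
  obtain \<alpha>' w' where a': "\<alpha>' \<in> S'" "w' \<in> stratum_box S' P'" "c = arb_point \<alpha>' w'"
    using stratum_iff[OF C'] assms(1) by blast
  obtain \<alpha> w where a: "\<alpha> \<in> S" "w \<in> stratum_cbox S P" "c = arb_point \<alpha> w"
    using assms(2) by (auto simp: closed_stratum_def[OF C])
  have "\<alpha>' \<in> V" "\<alpha> \<in> V" "w' \<in> extensional E" "w \<in> extensional E"
    using a a' corr_subset[OF C] corr_subset[OF C'] by (auto simp: stratum_box_def stratum_cbox_def)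
  then have w: "w' = w" "\<alpha> \<in> glued_component \<alpha>' w"
    using arb_point_eq_iff[of \<alpha>' w' \<alpha> w] a(3) a'(3) by auto
  have "S \<subseteq> glued_component \<alpha> w"
    using subset_glued_component[OF C a(1,2)] .
  also have "\<dots> \<subseteq> glued_component \<alpha>' w"
    using w(2) unfolding glued_component_def by (auto intro: rtrancl_trans)
  also have "\<dots> = S'"
    using glued_component_eq[OF C' a'(1)] a'(2) w(1) by simp
  finally show ?thesis
    using refines_on_if_box_cbox[OF C C'] a'(2) a(2) w(1) by blast
qed

lemma stratum_subset_closed_stratum_if_refines_on:
  assumes sub: "S \<subseteq> S'" and ref: "refines_on S P' P"
  shows "stratum V E (S', P') \<subseteq> closed_stratum S P"
proof
  fix c assume "c \<in> stratum V E (S', P')"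
  then obtain \<alpha>' w where a': "\<alpha>' \<in> S'" "w \<in> stratum_box S' P'" "c = arb_point \<alpha>' w"
    using stratum_iff[OF C'] by blast
  obtain \<alpha> where \<alpha>: "\<alpha> \<in> S"
    using corr_nonempty[OF C] by blast
  have "\<alpha>' \<in> V" "\<alpha> \<in> V" "w \<in> extensional E"
    using \<alpha> a' corr_subset[OF C] corr_subset[OF C'] by (auto simp: stratum_box_def)
  moreover have "\<alpha> \<in> glued_component \<alpha>' w"
    using glued_component_eq[OF C' a'(1,2)] \<alpha> sub by blast
  ultimately have "c = arb_point \<alpha> w"
    using arb_point_eq_iff[of \<alpha>' w \<alpha> w] a'(3) by simp
  moreover have "w \<in> stratum_cbox S P"
    using stratum_box_subset_cbox[OF corr_partition[OF C] sub ref a'(2)] .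
  ultimately show "c \<in> closed_stratum S P"
    using \<alpha> by (auto simp: closed_stratum_def[OF C])
qed

end

lemma stratum_nonempty:
  assumes C: "is_corr V E (S, P)"
  shows "stratum V E (S, P) \<noteq> {}"
proof -
  define w :: "'v set \<Rightarrow> real" where
    "w = (\<lambda>e. if e \<in> E then (if e \<in> inner_edges P then 1 else if e \<in> boundary_edges S then -1 else 0)
      else undefined)"
  have "w \<in> stratum_box S P"
    unfolding stratum_box_def w_def using edge_classes_disjoint[OF corr_partition[OF C]]
    by (auto simp: inner_edges_def cut_edges_def boundary_edges_def extensional_def)
  moreover obtain \<alpha> where "\<alpha> \<in> S"
    using corr_nonempty[OF C] by blast
  ultimately show ?thesis
    using stratum_iff[OF C] by blast
qed

end

theorem proposition2p18:
  fixes V :: "'v set" and E :: "'v set set"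
    and p p' :: "'v set \<times> 'v set set"
  assumes "is_tree V E"
    and "is_corr V E p" and "is_corr V E p'"
  shows "(corr_ge E p p' \<longleftrightarrow>
            stratum V E p' \<inter> (arb_space V E closure_of stratum V E p) \<noteq> {})
       \<and> (corr_ge E p p' \<longrightarrow> stratum V E p' \<subseteq> arb_space V E closure_of stratum V E p)"
proof -
  interpret tree_graph V E
    by (rule tree_graph.intro[OF assms(1)])
  obtain S P S' P' where p: "p = (S, P)" and p': "p' = (S', P')"
    by (cases p, cases p')
  have C: "is_corr V E (S, P)" and C': "is_corr V E (S', P')"
    using assms(2,3) p p' by auto
  have ge_iff: "corr_ge E p p' \<longleftrightarrow> S \<subseteq> S' \<and> refines_on S P' P"
    unfolding p p' by (rule corr_ge_iff_refines_on[OF C C'])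
  have closure: "arb_space V E closure_of stratum V E p = closed_stratum S P"
    unfolding p by (rule closure_stratum[OF C])
  show ?thesis
    unfolding closure ge_iff
    using refines_on_if_stratum_meets_closure[OF C C'] stratum_subset_closed_stratum_if_refines_on[OF C C']
      stratum_nonempty[OF C']
    unfolding p' by blast
qed

end
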